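(* Let $d\ge 2$. Define $$\tilde h_1(z)=z_1^{Q}\cdots z_d^{Q}\prod_{n\in W}\Big(\sum_{j=1}^d\frac{1}{\rho^j_{n_j}z_j}\Big),\qquad \tilde h_2(z)=z_1^{Q}\cdots z_{d-1}^{Q}z_d^{-Q}\prod_{n\in W}\Big(\rho^d_{n_d}z_d+\sum_{j=1}^{d-1}\frac{1}{\rho^j_{n_j}z_j}\Big).$$ Then $\tilde h_1$ is a polynomial in $z_1,\dots,z_d$ and there is a polynomial $h_1$ with $\tilde h_1(z)=h_1(z_1^{q_1},\dots,z_d^{q_d})$; $\tilde h_2$ is a polynomial in $z_1,\dots,z_{d-1},z_d^{-1}$ and there is a polynomial $h_2(w_1,\dots,w_{d-1},w_d^{-1})$ in the variables $w_1,\dots,w_{d-1},w_d^{-1}$ with $\tilde h_2(z)=h_2(z_1^{q_1},\dots,z_d^{q_d})$. Both $h_1$ and $h_2$ are irreducible (as polynomials in their respective variables): neither can be written as a product of two non-constant polynomials.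
   Context: $q_1,\dots,q_d$ are positive integers with greatest common divisor $1$, $Q=q_1\cdots q_d$, $W=\{n=(n_1,\dots,n_d)\in\mathbb{Z}^d:0\le n_j\le q_j-1\}$, and $\rho^j_{n_j}=e^{2\pi i n_j/q_j}$. *)

theory Defs
  imports "HOL-Analysis.Analysis" "HOL-Library.Poly_Mapping" "HOL-Computational_Algebra.Factorial_Ring"
begin

text \<open>Variable j (j = 0,..,d-1) corresponds to the paper's variable number j+1.\<close>

type_synonym mpoly = "(nat \<Rightarrow>\<^sub>0 nat) \<Rightarrow>\<^sub>0 complex"

definition mpoly_eval :: "mpoly \<Rightarrow> (nat \<Rightarrow> complex) \<Rightarrow> complex" where
  "mpoly_eval p x = (\<Sum>m\<in>Poly_Mapping.keys p.
      Poly_Mapping.lookup p m * (\<Prod>i\<in>Poly_Mapping.keys m. x i ^ Poly_Mapping.lookup m i))"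

definition mpoly_vars_below :: "nat \<Rightarrow> mpoly \<Rightarrow> bool" where
  "mpoly_vars_below d p \<longleftrightarrow> (\<forall>m\<in>Poly_Mapping.keys p. Poly_Mapping.keys m \<subseteq> {..<d})"

definition rho :: "(nat \<Rightarrow> nat) \<Rightarrow> nat \<Rightarrow> nat \<Rightarrow> complex" where
  "rho q j k = exp (2 * pi * \<i> * of_nat k / of_nat (q j))"

definition Wset :: "nat \<Rightarrow> (nat \<Rightarrow> nat) \<Rightarrow> (nat \<Rightarrow> nat) set" where
  "Wset d q = PiE {..<d} (\<lambda>j. {..<q j})"

definition Qprod :: "nat \<Rightarrow> (nat \<Rightarrow> nat) \<Rightarrow> nat" where
  "Qprod d q = (\<Prod>j<d. q j)"

definition htilde1 :: "nat \<Rightarrow> (nat \<Rightarrow> nat) \<Rightarrow> (nat \<Rightarrow> complex) \<Rightarrow> complex" where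
  "htilde1 d q z = (\<Prod>j<d. z j ^ Qprod d q) *
     (\<Prod>n\<in>Wset d q. \<Sum>j<d. 1 / (rho q j (n j) * z j))"

definition htilde2 :: "nat \<Rightarrow> (nat \<Rightarrow> nat) \<Rightarrow> (nat \<Rightarrow> complex) \<Rightarrow> complex" where
  "htilde2 d q z = (\<Prod>j<d-1. z j ^ Qprod d q) / z (d-1) ^ Qprod d q *
     (\<Prod>n\<in>Wset d q. rho q (d-1) (n (d-1)) * z (d-1) + (\<Sum>j<d-1. 1 / (rho q j (n j) * z j)))"

end

theory Submission
  imports Defs
begin

text \<open>
  The linear forms \<open>l\<^sub>n = \<Sum>\<^sub>j \<rho>\<^sub>j\<^bsup>-n\<^sub>j\<^esup> X\<^sub>j\<close> (\<open>n \<in> W\<close>) are prime, and pairwise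
  non-associated because the \<open>q\<^sub>j\<close> are coprime. Their product \<open>G\<close> is invariant under each
  rotation \<open>X\<^sub>i \<mapsto> \<rho>\<^sub>i\<^sup>-\<^sup>1 X\<^sub>i\<close>, which permutes the \<open>l\<^sub>n\<close> by a cyclic shift of \<open>W\<close>, so
  \<open>G(X) = g(X\<^sub>1\<^bsup>q\<^sub>1\<^esup>, \<dots>, X\<^sub>d\<^bsup>q\<^sub>d\<^esup>)\<close>. A factor \<open>a\<close> of \<open>g\<close> gives the factor
  \<open>a(X\<^sup>q)\<close> of \<open>G\<close>, which is again rotation invariant; by unique factorisation it is, up to a
  constant, the product of the \<open>l\<^sub>n\<close> over a shift-invariant subset of \<open>W\<close>. The shifts act
  transitively, so the subset is empty or all of \<open>W\<close>, and \<open>g\<close> is irreducible.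

  Since \<open>h\<^sub>1(z) = z\<^bsup>(Q,\<dots>,Q)\<^esup> G(1/z)\<close>, the polynomial \<open>h\<^sub>1\<close> is the reciprocal
  \<open>w\<^bsup>N\<^esup> g(1/w)\<close> with \<open>N\<^sub>i = Q/q\<^sub>i\<close>. It has degree \<open>N\<^sub>i\<close> in \<open>w\<^sub>i\<close> and is divisible by no
  variable, so a factorisation of \<open>h\<^sub>1\<close> would reflect to one of \<open>g\<close>. Finally, replacing
  \<open>z\<^sub>d\<close> by \<open>1/z\<^sub>d\<close> and \<open>n\<^sub>d\<close> by \<open>-n\<^sub>d\<close> turns \<open>h\<^sub>2\<close> into \<open>h\<^sub>1\<close>, so \<open>h\<^sub>2 = h\<^sub>1\<close>
  serves in the second statement.
\<close>

section \<open>Monomial maps and evaluation\<close>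

type_synonym monom = "nat \<Rightarrow>\<^sub>0 nat"

lemma poly_mapping_sum_single:
  "(p :: 'a \<Rightarrow>\<^sub>0 'b::comm_monoid_add) =
     (\<Sum>m\<in>Poly_Mapping.keys p. Poly_Mapping.single m (Poly_Mapping.lookup p m))"
  by (rule poly_mapping_eqI) (simp add: lookup_sum lookup_single when_def in_keys_iff)

lemma single_Suc_0_eq_iff [simp]:
  "Poly_Mapping.single a (Suc 0) = Poly_Mapping.single b (Suc 0) \<longleftrightarrow> a = b"
  by (metis lookup_single_eq lookup_single_not_eq zero_neq_one One_nat_def)

lemma single_Suc_0_neq_0 [simp]: "Poly_Mapping.single i (Suc 0) \<noteq> 0"
  by (metis lookup_single_eq lookup_zero nat.distinct(1))

lemma keys_monom_add: "Poly_Mapping.keys ((m::monom) + m') = Poly_Mapping.keys m \<union> Poly_Mapping.keys m'"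
  by (auto simp: in_keys_iff lookup_add)

lemma prod_single_mpoly:
  "(\<Prod>n\<in>T. Poly_Mapping.single (t n) (c n) :: mpoly) = Poly_Mapping.single (\<Sum>n\<in>T. t n) (\<Prod>n\<in>T. c n)"
  by (induction T rule: infinite_finite_induct) (simp_all add: mult_single)

lemma mpoly_mult_eq_double_sum:
  "(a::mpoly) * b = (\<Sum>m\<in>Poly_Mapping.keys a. \<Sum>m'\<in>Poly_Mapping.keys b.
       Poly_Mapping.single (m + m') (Poly_Mapping.lookup a m * Poly_Mapping.lookup b m'))"
  by (subst (1 2) poly_mapping_sum_single) (simp add: sum_product mult_single)

definition map_monoms :: "(monom \<Rightarrow> monom) \<Rightarrow> (monom \<Rightarrow> complex) \<Rightarrow> mpoly \<Rightarrow> mpoly" where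
  "map_monoms f w p =
     (\<Sum>m\<in>Poly_Mapping.keys p. Poly_Mapping.single (f m) (w m * Poly_Mapping.lookup p m))"

lemma map_monoms_superset:
  assumes "finite K" "Poly_Mapping.keys p \<subseteq> K"
  shows "map_monoms f w p = (\<Sum>m\<in>K. Poly_Mapping.single (f m) (w m * Poly_Mapping.lookup p m))"
  unfolding map_monoms_def
  by (rule sum.mono_neutral_left) (use assms in \<open>auto simp: in_keys_iff\<close>)

lemma map_monoms_0 [simp]: "map_monoms f w 0 = 0"
  by (simp add: map_monoms_def)

lemma map_monoms_single [simp]:
  "map_monoms f w (Poly_Mapping.single m c) = Poly_Mapping.single (f m) (w m * c)"
  by (cases "c = 0") (simp_all add: map_monoms_def)

lemma map_monoms_add: "map_monoms f w (p + p') = map_monoms f w p + map_monoms f w p'"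
proof -
  let ?K = "Poly_Mapping.keys p \<union> Poly_Mapping.keys p'"
  have "map_monoms f w (p + p') =
      (\<Sum>m\<in>?K. Poly_Mapping.single (f m) (w m * Poly_Mapping.lookup (p + p') m))"
    using keys_add[of p p'] by (intro map_monoms_superset) auto
  also have "\<dots> = map_monoms f w p + map_monoms f w p'"
    by (simp add: lookup_add distrib_left single_add sum.distrib map_monoms_superset[of ?K])
  finally show ?thesis .
qed

lemma map_monoms_sum: "map_monoms f w (\<Sum>i\<in>I. P i) = (\<Sum>i\<in>I. map_monoms f w (P i))"
  by (induction I rule: infinite_finite_induct) (simp_all add: map_monoms_add)

lemma map_monoms_1: "f 0 = 0 \<Longrightarrow> w 0 = 1 \<Longrightarrow> map_monoms f w 1 = 1"
  using map_monoms_single[of f w 0 1] by simp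

lemma map_monoms_mult:
  assumes "\<And>m m'. m \<in> Poly_Mapping.keys a \<Longrightarrow> m' \<in> Poly_Mapping.keys b \<Longrightarrow>
              f (m + m') = f1 m + f2 m' \<and> w (m + m') = w1 m * w2 m'"
  shows "map_monoms f w (a * b) = map_monoms f1 w1 a * map_monoms f2 w2 b"
proof -
  have "map_monoms f w (a * b) = (\<Sum>m\<in>Poly_Mapping.keys a. \<Sum>m'\<in>Poly_Mapping.keys b.
       Poly_Mapping.single (f (m + m')) (w (m + m') * (Poly_Mapping.lookup a m * Poly_Mapping.lookup b m')))"
    by (subst mpoly_mult_eq_double_sum) (simp add: map_monoms_sum)
  also have "\<dots> = (\<Sum>m\<in>Poly_Mapping.keys a. \<Sum>m'\<in>Poly_Mapping.keys b.
       Poly_Mapping.single (f1 m + f2 m')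
         ((w1 m * Poly_Mapping.lookup a m) * (w2 m' * Poly_Mapping.lookup b m')))"
    by (intro sum.cong refl) (simp add: assms mult_ac)
  also have "\<dots> = map_monoms f1 w1 a * map_monoms f2 w2 b"
    by (simp add: map_monoms_def sum_product mult_single)
  finally show ?thesis .
qed

lemma lookup_map_monoms:
  "Poly_Mapping.lookup (map_monoms f w p) k =
     (\<Sum>m\<in>Poly_Mapping.keys p. (w m * Poly_Mapping.lookup p m when f m = k))"
  by (simp add: map_monoms_def lookup_sum lookup_single)

lemma lookup_map_monoms_inj:
  assumes "inj_on f (insert m (Poly_Mapping.keys p))"
  shows "Poly_Mapping.lookup (map_monoms f w p) (f m) = w m * Poly_Mapping.lookup p m"
proof -
  have "Poly_Mapping.lookup (map_monoms f w p) (f m) =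
      (\<Sum>m'\<in>Poly_Mapping.keys p. (w m' * Poly_Mapping.lookup p m' when m' = m))"
    unfolding lookup_map_monoms
    by (intro sum.cong refl) (use assms in \<open>auto simp: when_def inj_on_def\<close>)
  also have "\<dots> = w m * Poly_Mapping.lookup p m"
    by (simp add: when_def in_keys_iff)
  finally show ?thesis .
qed

lemma keys_map_monoms_subset: "Poly_Mapping.keys (map_monoms f w p) \<subseteq> f ` Poly_Mapping.keys p"
proof
  fix k assume "k \<in> Poly_Mapping.keys (map_monoms f w p)"
  then have "Poly_Mapping.lookup (map_monoms f w p) k \<noteq> 0" by (simp add: in_keys_iff)
  then obtain m where "m \<in> Poly_Mapping.keys p" "f m = k"
    unfolding lookup_map_monoms by (metis (mono_tags, lifting) sum.neutral when_def)
  then show "k \<in> f ` Poly_Mapping.keys p" by auto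
qed

lemma keys_map_monoms:
  assumes "inj_on f (Poly_Mapping.keys p)"
  shows "Poly_Mapping.keys (map_monoms f (\<lambda>_. 1) p) = f ` Poly_Mapping.keys p"
proof
  show "f ` Poly_Mapping.keys p \<subseteq> Poly_Mapping.keys (map_monoms f (\<lambda>_. 1) p)"
  proof
    fix k assume "k \<in> f ` Poly_Mapping.keys p"
    then obtain m where m: "m \<in> Poly_Mapping.keys p" "k = f m" by auto
    have "Poly_Mapping.lookup (map_monoms f (\<lambda>_. 1) p) (f m) = 1 * Poly_Mapping.lookup p m"
      by (rule lookup_map_monoms_inj) (use assms m in \<open>simp add: insert_absorb\<close>)
    then show "k \<in> Poly_Mapping.keys (map_monoms f (\<lambda>_. 1) p)" using m by (simp add: in_keys_iff)
  qed
qed (rule keys_map_monoms_subset)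

lemma map_monoms_cong:
  "(\<And>m. m \<in> Poly_Mapping.keys p \<Longrightarrow> f m = f' m \<and> w m = w' m) \<Longrightarrow>
     map_monoms f w p = map_monoms f' w' p"
  unfolding map_monoms_def by (intro sum.cong refl) auto

lemma map_monoms_id:
  assumes "\<And>m. m \<in> Poly_Mapping.keys p \<Longrightarrow> f m = m \<and> w m = 1"
  shows "map_monoms f w p = p"
proof -
  have "map_monoms f w p = map_monoms (\<lambda>m. m) (\<lambda>_. 1) p" using assms by (intro map_monoms_cong) auto
  also have "\<dots> = p" by (simp add: map_monoms_def flip: poly_mapping_sum_single)
  finally show ?thesis .
qed

lemma map_monoms_map_monoms:
  "map_monoms f1 w1 (map_monoms f2 w2 p) = map_monoms (\<lambda>m. f1 (f2 m)) (\<lambda>m. w1 (f2 m) * w2 m) p"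
  unfolding map_monoms_def[of f2] map_monoms_sum map_monoms_single
  by (simp add: map_monoms_def[of "\<lambda>m. f1 (f2 m)"] ac_simps)

definition monom_eval :: "(nat \<Rightarrow> 'a::comm_monoid_mult) \<Rightarrow> monom \<Rightarrow> 'a" where
  "monom_eval x m = (\<Prod>i\<in>Poly_Mapping.keys m. x i ^ Poly_Mapping.lookup m i)"

lemma monom_eval_superset:
  "finite K \<Longrightarrow> Poly_Mapping.keys m \<subseteq> K \<Longrightarrow>
     monom_eval x m = (\<Prod>i\<in>K. x i ^ Poly_Mapping.lookup m i)"
  unfolding monom_eval_def by (rule prod.mono_neutral_left) (auto simp: in_keys_iff)

lemma monom_eval_0 [simp]: "monom_eval x 0 = 1"
  by (simp add: monom_eval_def)

lemma monom_eval_single_1 [simp]: "monom_eval x (Poly_Mapping.single j (Suc 0)) = x j"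
  by (simp add: monom_eval_def)

lemma monom_eval_add: "monom_eval x (m + m') = monom_eval x m * monom_eval x m'"
proof -
  let ?K = "Poly_Mapping.keys m \<union> Poly_Mapping.keys m'"
  have "monom_eval x (m + m') = (\<Prod>i\<in>?K. x i ^ Poly_Mapping.lookup (m + m') i)"
    by (rule monom_eval_superset) (simp_all add: keys_monom_add)
  also have "\<dots> = monom_eval x m * monom_eval x m'"
    by (simp add: lookup_add power_add prod.distrib monom_eval_superset[of ?K])
  finally show ?thesis .
qed

definition complex_ring_hom :: "(complex \<Rightarrow> 'a::comm_ring_1) \<Rightarrow> bool" where
  "complex_ring_hom h \<longleftrightarrow>
     h 0 = 0 \<and> h 1 = 1 \<and> (\<forall>a b. h (a + b) = h a + h b) \<and> (\<forall>a b. h (a * b) = h a * h b)"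

definition eval_hom :: "(complex \<Rightarrow> 'a::comm_ring_1) \<Rightarrow> (nat \<Rightarrow> 'a) \<Rightarrow> mpoly \<Rightarrow> 'a" where
  "eval_hom h x p = (\<Sum>m\<in>Poly_Mapping.keys p. h (Poly_Mapping.lookup p m) * monom_eval x m)"

lemma complex_ring_hom_id: "complex_ring_hom (\<lambda>c. c)"
  by (simp add: complex_ring_hom_def)

lemma mpoly_eval_eq_eval_hom: "mpoly_eval p x = eval_hom (\<lambda>c. c) x p"
  by (simp add: mpoly_eval_def eval_hom_def monom_eval_def)

lemma eval_hom_superset:
  "complex_ring_hom h \<Longrightarrow> finite K \<Longrightarrow> Poly_Mapping.keys p \<subseteq> K \<Longrightarrow>
     eval_hom h x p = (\<Sum>m\<in>K. h (Poly_Mapping.lookup p m) * monom_eval x m)"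
  unfolding eval_hom_def
  by (rule sum.mono_neutral_left) (auto simp: in_keys_iff complex_ring_hom_def)

lemma eval_hom_0 [simp]: "eval_hom h x 0 = 0"
  by (simp add: eval_hom_def)

lemma eval_hom_single:
  "complex_ring_hom h \<Longrightarrow> eval_hom h x (Poly_Mapping.single m c) = h c * monom_eval x m"
  by (cases "c = 0") (simp_all add: eval_hom_def complex_ring_hom_def)

lemma eval_hom_add:
  assumes h: "complex_ring_hom h"
  shows "eval_hom h x (p + p') = eval_hom h x p + eval_hom h x p'"
proof -
  let ?K = "Poly_Mapping.keys p \<union> Poly_Mapping.keys p'"
  have "eval_hom h x (p + p') = (\<Sum>m\<in>?K. h (Poly_Mapping.lookup (p + p') m) * monom_eval x m)"
    using keys_add[of p p'] by (intro eval_hom_superset[OF h]) auto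
  also have "\<dots> = eval_hom h x p + eval_hom h x p'"
    using h by (simp add: lookup_add complex_ring_hom_def distrib_right sum.distrib
        eval_hom_superset[OF h, of ?K])
  finally show ?thesis .
qed

lemma eval_hom_sum:
  "complex_ring_hom h \<Longrightarrow> eval_hom h x (\<Sum>i\<in>I. P i) = (\<Sum>i\<in>I. eval_hom h x (P i))"
  by (induction I rule: infinite_finite_induct) (simp_all add: eval_hom_add)

lemma eval_hom_mult:
  assumes h: "complex_ring_hom h"
  shows "eval_hom h x (a * b) = eval_hom h x a * eval_hom h x b"
proof -
  have "eval_hom h x (a * b) = (\<Sum>m\<in>Poly_Mapping.keys a. \<Sum>m'\<in>Poly_Mapping.keys b.
       h (Poly_Mapping.lookup a m * Poly_Mapping.lookup b m') * monom_eval x (m + m'))"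
    by (subst mpoly_mult_eq_double_sum) (simp add: eval_hom_sum[OF h] eval_hom_single[OF h])
  also have "\<dots> = (\<Sum>m\<in>Poly_Mapping.keys a. \<Sum>m'\<in>Poly_Mapping.keys b.
       (h (Poly_Mapping.lookup a m) * monom_eval x m) * (h (Poly_Mapping.lookup b m') * monom_eval x m'))"
    using h by (intro sum.cong refl) (simp add: complex_ring_hom_def monom_eval_add ac_simps)
  also have "\<dots> = eval_hom h x a * eval_hom h x b"
    by (simp add: eval_hom_def sum_product)
  finally show ?thesis .
qed

lemma eval_hom_1: "complex_ring_hom h \<Longrightarrow> eval_hom h x 1 = 1"
  using eval_hom_single[of h x 0 1] by (simp add: complex_ring_hom_def)

lemma eval_hom_prod:
  "complex_ring_hom h \<Longrightarrow> eval_hom h x (\<Prod>i\<in>I. P i) = (\<Prod>i\<in>I. eval_hom h x (P i))"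
  by (induction I rule: infinite_finite_induct) (simp_all add: eval_hom_mult eval_hom_1)

lemma eval_hom_map_monoms:
  "complex_ring_hom h \<Longrightarrow> eval_hom h x (map_monoms f w p) =
     (\<Sum>m\<in>Poly_Mapping.keys p. h (w m * Poly_Mapping.lookup p m) * monom_eval x (f m))"
  by (simp add: map_monoms_def eval_hom_sum eval_hom_single)

lemma eval_hom_cong_vars:
  assumes "\<And>m. m \<in> Poly_Mapping.keys p \<Longrightarrow> Poly_Mapping.keys m \<subseteq> A" "\<And>i. i \<in> A \<Longrightarrow> x i = y i"
  shows "eval_hom h x p = eval_hom h y p"
  unfolding eval_hom_def monom_eval_def
  by (intro sum.cong refl arg_cong2[where f="(*)"] prod.cong) (metis assms subsetD)

definition Var :: "nat \<Rightarrow> mpoly" where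
  "Var i = Poly_Mapping.single (Poly_Mapping.single i 1) 1"

definition Const :: "complex \<Rightarrow> mpoly" where
  "Const c = Poly_Mapping.single 0 c"

lemma Const_0 [simp]: "Const 0 = 0"
  by (simp add: Const_def)

lemma Const_1 [simp]: "Const 1 = 1"
  by (simp add: Const_def)

lemma Const_mult [simp]: "Const a * Const b = Const (a * b)"
  by (simp add: Const_def mult_single)

lemma lookup_Const_mult: "Poly_Mapping.lookup (Const c * p) m = c * Poly_Mapping.lookup p m"
proof -
  have "Const c * p = map_monoms (\<lambda>m. m) (\<lambda>_. c) p"
    by (subst (1) poly_mapping_sum_single)
      (simp add: Const_def map_monoms_def sum_distrib_left mult_single)
  then show ?thesis
    using lookup_map_monoms_inj[of "\<lambda>m. m" m p "\<lambda>_. c"] by simp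
qed

lemma complex_ring_hom_Const: "complex_ring_hom Const"
  by (simp add: complex_ring_hom_def Const_def single_add mult_single)

lemma monom_eval_Var: "monom_eval Var m = Poly_Mapping.single m 1"
proof -
  have pow: "Var i ^ k = Poly_Mapping.single (Poly_Mapping.single i k) 1" for i k
    by (induction k) (simp_all add: Var_def mult_single flip: single_add)
  have "monom_eval Var m =
      Poly_Mapping.single (\<Sum>i\<in>Poly_Mapping.keys m. Poly_Mapping.single i (Poly_Mapping.lookup m i)) 1"
    by (simp add: monom_eval_def pow prod_single_mpoly)
  then show ?thesis by (simp flip: poly_mapping_sum_single)
qed

lemma eval_hom_Const_Var: "eval_hom Const Var p = p"
  by (simp add: eval_hom_def monom_eval_Var Const_def mult_single flip: poly_mapping_sum_single)

section \<open>Degrees and units\<close>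

lemma lookup_0_le_of_monom_le:
  assumes "(m::monom) \<le> M"
  shows "Poly_Mapping.lookup m 0 \<le> Poly_Mapping.lookup M 0"
proof -
  have "f 0 \<le> g 0" if "less_fun f g \<or> f = g" for f g :: "nat \<Rightarrow> nat"
    using that unfolding less_fun_def by (metis bot_nat_0.not_eq_extremum order.refl order.strict_implies_order)
  then show ?thesis using assms by (auto simp: less_eq_poly_mapping.rep_eq)
qed

definition lead_monom :: "mpoly \<Rightarrow> monom" where
  "lead_monom p = Max (Poly_Mapping.keys p)"

lemma lead_monom_in_keys: "p \<noteq> 0 \<Longrightarrow> lead_monom p \<in> Poly_Mapping.keys p"
  unfolding lead_monom_def by (rule Max_in) auto

lemma lead_monom_ge: "m \<in> Poly_Mapping.keys p \<Longrightarrow> m \<le> lead_monom p"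
  unfolding lead_monom_def by (rule Max_ge) auto

lemma lookup_mult_lead_monom:
  assumes "a \<noteq> 0" "b \<noteq> 0"
  shows "Poly_Mapping.lookup (a * b) (lead_monom a + lead_monom b) =
           Poly_Mapping.lookup a (lead_monom a) * Poly_Mapping.lookup b (lead_monom b)"
proof -
  have lead_sum_iff: "m + m' = lead_monom a + lead_monom b \<longleftrightarrow> m = lead_monom a \<and> m' = lead_monom b"
    if "m \<in> Poly_Mapping.keys a" "m' \<in> Poly_Mapping.keys b" for m m'
  proof
    assume eq: "m + m' = lead_monom a + lead_monom b"
    have le: "m \<le> lead_monom a" "m' \<le> lead_monom b" using that by (auto intro: lead_monom_ge)
    show "m = lead_monom a \<and> m' = lead_monom b"
    proof (rule ccontr)
      assume "\<not> (m = lead_monom a \<and> m' = lead_monom b)"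
      then have "m + m' < lead_monom a + lead_monom b"
        using le add_less_le_mono add_le_less_mono by (metis order_le_imp_less_or_eq)
      then show False using eq by simp
    qed
  qed simp
  have "Poly_Mapping.lookup (a * b) (lead_monom a + lead_monom b) =
      (\<Sum>m\<in>Poly_Mapping.keys a. \<Sum>m'\<in>Poly_Mapping.keys b.
         (Poly_Mapping.lookup a m * Poly_Mapping.lookup b m' when m + m' = lead_monom a + lead_monom b))"
    by (subst mpoly_mult_eq_double_sum) (simp add: lookup_sum lookup_single)
  also have "\<dots> = (\<Sum>m\<in>Poly_Mapping.keys a. \<Sum>m'\<in>Poly_Mapping.keys b.
      (Poly_Mapping.lookup a m when m = lead_monom a) * (Poly_Mapping.lookup b m' when m' = lead_monom b))"
    by (intro sum.cong refl) (simp add: lead_sum_iff when_def)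
  also have "\<dots> = Poly_Mapping.lookup a (lead_monom a) * Poly_Mapping.lookup b (lead_monom b)"
    by (simp add: when_def lead_monom_in_keys assms flip: sum_product)
  finally show ?thesis .
qed

lemma lead_monom_mult:
  assumes "a \<noteq> 0" "b \<noteq> 0"
  shows "lead_monom (a * b) = lead_monom a + lead_monom b"
  unfolding lead_monom_def[of "a * b"]
proof (rule Max_eqI)
  show "lead_monom a + lead_monom b \<in> Poly_Mapping.keys (a * b)"
    using lookup_mult_lead_monom[OF assms] lead_monom_in_keys[OF assms(1)] lead_monom_in_keys[OF assms(2)]
    by (simp add: in_keys_iff)
  show "k \<le> lead_monom a + lead_monom b" if "k \<in> Poly_Mapping.keys (a * b)" for k
    using keys_mult[of a b] that by (auto intro!: add_mono lead_monom_ge)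
qed simp

definition swap_monom :: "nat \<Rightarrow> monom \<Rightarrow> monom" where
  "swap_monom i m = Poly_Mapping.map_key (Transposition.transpose 0 i) m"

lemma lookup_swap_monom:
  "Poly_Mapping.lookup (swap_monom i m) k = Poly_Mapping.lookup m (Transposition.transpose 0 i k)"
  by (simp add: swap_monom_def map_key.rep_eq inj_transpose)

lemma swap_monom_swap_monom [simp]: "swap_monom i (swap_monom i m) = m"
  by (rule poly_mapping_eqI) (simp add: lookup_swap_monom)

lemma swap_monom_add: "swap_monom i (m + m') = swap_monom i m + swap_monom i m'"
  by (simp add: swap_monom_def map_key_plus inj_transpose)

definition swap_vars :: "nat \<Rightarrow> mpoly \<Rightarrow> mpoly" where
  "swap_vars i p = map_monoms (swap_monom i) (\<lambda>_. 1) p"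

lemma swap_vars_mult: "swap_vars i (a * b) = swap_vars i a * swap_vars i b"
  unfolding swap_vars_def by (rule map_monoms_mult) (simp add: swap_monom_add)

lemma keys_swap_vars: "Poly_Mapping.keys (swap_vars i p) = swap_monom i ` Poly_Mapping.keys p"
  unfolding swap_vars_def by (rule keys_map_monoms) (metis inj_onI swap_monom_swap_monom)

definition var_degree :: "nat \<Rightarrow> mpoly \<Rightarrow> nat" where
  "var_degree i p = Max ((\<lambda>m. Poly_Mapping.lookup m i) ` Poly_Mapping.keys p)"

lemma var_degree_ge: "m \<in> Poly_Mapping.keys p \<Longrightarrow> Poly_Mapping.lookup m i \<le> var_degree i p"
  unfolding var_degree_def by (rule Max_ge) auto

lemma var_degree_eqI:
  "m \<in> Poly_Mapping.keys p \<Longrightarrow> (\<And>m'. m' \<in> Poly_Mapping.keys p \<Longrightarrow> Poly_Mapping.lookup m' i \<le> k) \<Longrightarrow>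
     Poly_Mapping.lookup m i = k \<Longrightarrow> var_degree i p = k"
  unfolding var_degree_def by (rule Max_eqI) auto

lemma var_degree_1 [simp]: "var_degree i 1 = 0"
  by (simp add: var_degree_def)

lemma var_degree_Const: "c \<noteq> 0 \<Longrightarrow> var_degree i (Const c) = 0"
  by (simp add: var_degree_def Const_def)

text \<open>Moving variable \<open>i\<close> to the front makes the lexicographic leading monomial
  read off the degree in \<open>i\<close>.\<close>

lemma var_degree_eq_lookup_lead_monom:
  assumes "p \<noteq> 0"
  shows "var_degree i p = Poly_Mapping.lookup (lead_monom (swap_vars i p)) 0"
proof -
  have "swap_vars i p \<noteq> 0" using assms keys_swap_vars[of i p] by auto
  then have "lead_monom (swap_vars i p) \<in> swap_monom i ` Poly_Mapping.keys p"
    using lead_monom_in_keys keys_swap_vars by metis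
  then obtain m0 where m0: "m0 \<in> Poly_Mapping.keys p" "lead_monom (swap_vars i p) = swap_monom i m0"
    by blast
  show ?thesis
  proof (rule var_degree_eqI[OF m0(1)])
    fix m assume "m \<in> Poly_Mapping.keys p"
    then have "swap_monom i m \<le> swap_monom i m0"
      using keys_swap_vars m0(2) by (metis image_eqI lead_monom_ge)
    then show "Poly_Mapping.lookup m i \<le> Poly_Mapping.lookup (lead_monom (swap_vars i p)) 0"
      unfolding m0(2) using lookup_0_le_of_monom_le by (fastforce simp: lookup_swap_monom)
  qed (simp add: m0(2) lookup_swap_monom)
qed

lemma var_degree_mult:
  assumes "a \<noteq> 0" "b \<noteq> 0"
  shows "var_degree i (a * b) = var_degree i a + var_degree i b"
proof -
  have "swap_vars i a \<noteq> 0" "swap_vars i b \<noteq> 0"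
    using assms keys_swap_vars[of i a] keys_swap_vars[of i b] by auto
  then show ?thesis
    using assms by (simp add: var_degree_eq_lookup_lead_monom swap_vars_mult lead_monom_mult lookup_add)
qed

lemma Const_of_var_degree_0:
  assumes "\<And>i. var_degree i p = 0"
  shows "p = Const (Poly_Mapping.lookup p 0)"
proof -
  have keys: "Poly_Mapping.keys p \<subseteq> {0}"
  proof
    fix m assume "m \<in> Poly_Mapping.keys p"
    then have "m = 0" using var_degree_ge assms by (metis le_zero_eq lookup_zero poly_mapping_eqI)
    then show "m \<in> {0}" by simp
  qed
  have "p = (\<Sum>m\<in>Poly_Mapping.keys p. Poly_Mapping.single m (Poly_Mapping.lookup p m))"
    by (rule poly_mapping_sum_single)
  also have "\<dots> = (\<Sum>m\<in>{0}. Poly_Mapping.single m (Poly_Mapping.lookup p m))"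
    by (rule sum.mono_neutral_left) (use keys in \<open>auto simp: in_keys_iff\<close>)
  finally show ?thesis by (simp add: Const_def)
qed

lemma dvd_1_iff_Const: "(p::mpoly) dvd 1 \<longleftrightarrow> (\<exists>c. c \<noteq> 0 \<and> p = Const c)"
proof
  assume "p dvd 1"
  then obtain b where pb: "1 = p * b" by (rule dvdE)
  then have "p \<noteq> 0" "b \<noteq> 0" by auto
  then have "var_degree i p = 0" for i using var_degree_mult[of p b i] pb by simp
  then have "p = Const (Poly_Mapping.lookup p 0)" by (rule Const_of_var_degree_0)
  then show "\<exists>c. c \<noteq> 0 \<and> p = Const c" using \<open>p \<noteq> 0\<close> by (metis Const_0)
next
  assume "\<exists>c. c \<noteq> 0 \<and> p = Const c"
  then obtain c where "c \<noteq> 0" "p = Const c" by blast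
  then have "p * Const (1 / c) = 1" by simp
  then show "p dvd 1" by (metis dvdI)
qed

section \<open>Linear forms\<close>

lemma dvd_power_diff: "(l::'a::comm_ring_1) dvd x - y \<Longrightarrow> l dvd x ^ k - y ^ k"
proof (induction k)
  case (Suc k)
  have "x ^ Suc k - y ^ Suc k = x * (x ^ k - y ^ k) + (x - y) * y ^ k" by (simp add: algebra_simps)
  then show ?case using Suc by (metis dvd_add dvd_mult dvd_mult2)
qed simp

lemma dvd_prod_diff:
  "(\<And>i. i \<in> K \<Longrightarrow> (l::'a::comm_ring_1) dvd f i - g i) \<Longrightarrow> l dvd (\<Prod>i\<in>K. f i) - (\<Prod>i\<in>K. g i)"
proof (induction K rule: infinite_finite_induct)
  case (insert i K)
  have "(\<Prod>i\<in>insert i K. f i) - (\<Prod>i\<in>insert i K. g i) =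
        f i * ((\<Prod>i\<in>K. f i) - (\<Prod>i\<in>K. g i)) + (f i - g i) * (\<Prod>i\<in>K. g i)"
    using insert by (simp add: algebra_simps)
  then show ?case using insert by (metis dvd_add dvd_mult dvd_mult2 insertI1 insertI2)
qed simp_all

lemma eval_hom_Const_diff_dvd:
  assumes "\<And>i. l dvd x i - y i"
  shows "l dvd eval_hom Const x p - eval_hom Const y p"
proof -
  have "eval_hom Const x p - eval_hom Const y p =
      (\<Sum>m\<in>Poly_Mapping.keys p. Const (Poly_Mapping.lookup p m) * (monom_eval x m - monom_eval y m))"
    by (simp add: eval_hom_def sum_subtractf right_diff_distrib)
  also have "l dvd \<dots>"
    unfolding monom_eval_def by (intro dvd_sum dvd_mult dvd_prod_diff dvd_power_diff assms)
  finally show ?thesis .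
qed

definition linear_form :: "nat \<Rightarrow> (nat \<Rightarrow> complex) \<Rightarrow> mpoly" where
  "linear_form d c = (\<Sum>j<d. Const (c j) * Var j)"

lemma Const_mult_Var: "Const c * Var j = Poly_Mapping.single (Poly_Mapping.single j (Suc 0)) c"
  by (simp add: Const_def Var_def mult_single)

lemma lookup_linear_form:
  "Poly_Mapping.lookup (linear_form d c) (Poly_Mapping.single j (Suc 0)) = (if j < d then c j else 0)"
  by (simp add: linear_form_def Const_mult_Var lookup_sum lookup_single when_def)

lemma keys_linear_form:
  "Poly_Mapping.keys (linear_form d c) \<subseteq> {Poly_Mapping.single j (Suc 0) | j. j < d}"
  unfolding linear_form_def Const_mult_Var by (rule order.trans[OF keys_sum]) auto

lemma linear_form_nonzero: "j < d \<Longrightarrow> c j \<noteq> 0 \<Longrightarrow> linear_form d c \<noteq> 0"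
  using lookup_linear_form[of d c j] by auto

lemma eval_hom_linear_form:
  "complex_ring_hom h \<Longrightarrow> eval_hom h x (linear_form d c) = (\<Sum>j<d. h (c j) * x j)"
  by (simp add: linear_form_def Const_mult_Var eval_hom_sum eval_hom_single)

lemma var_degree_linear_form:
  assumes "0 < d" "\<forall>j<d. c j \<noteq> 0"
  shows "var_degree i (linear_form d c) = (if i < d then 1 else 0)"
proof -
  let ?j = "if i < d then i else 0"
  have "?j < d" using assms by simp
  then have "Poly_Mapping.single ?j (Suc 0) \<in> Poly_Mapping.keys (linear_form d c)"
    using assms by (simp add: in_keys_iff lookup_linear_form)
  moreover have "Poly_Mapping.lookup m i \<le> (if i < d then 1 else 0)"
    if "m \<in> Poly_Mapping.keys (linear_form d c)" for m
    using that keys_linear_form by (fastforce simp: lookup_single when_def)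
  ultimately show ?thesis using assms(1) by (intro var_degree_eqI) (auto simp: lookup_single)
qed

lemma linear_form_dvd_linear_formD:
  assumes d: "0 < d" and c: "\<forall>j<d. c j \<noteq> 0" and c': "\<forall>j<d. c' j \<noteq> 0"
    and dvd: "linear_form d c dvd linear_form d c'"
  shows "\<exists>a. \<forall>j<d. c' j = a * c j"
proof -
  obtain k where "linear_form d c' = linear_form d c * k"
    using dvd by (rule dvdE)
  then have k: "linear_form d c' = k * linear_form d c" by (simp add: mult.commute)
  have nonzero: "linear_form d c \<noteq> 0" "linear_form d c' \<noteq> 0"
    using linear_form_nonzero d c c' by auto
  then have "k \<noteq> 0" using k by auto
  have "var_degree i k + var_degree i (linear_form d c) = var_degree i (linear_form d c')" for i
    using var_degree_mult[OF \<open>k \<noteq> 0\<close> nonzero(1), of i] k by simp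
  then have "var_degree i k = 0" for i
    using var_degree_linear_form[OF d c] var_degree_linear_form[OF d c'] by simp
  then have "k = Const (Poly_Mapping.lookup k 0)" by (rule Const_of_var_degree_0)
  then show ?thesis
    using arg_cong[OF k, of "\<lambda>p. Poly_Mapping.lookup p (Poly_Mapping.single _ (Suc 0))"]
    by (metis lookup_Const_mult lookup_linear_form)
qed

text \<open>Reduction modulo the linear form is the substitution
  \<open>X\<^sub>0 \<mapsto> -(c\<^sub>1 X\<^sub>1 + \<dots> + c\<^sub>d\<^sub>-\<^sub>1 X\<^sub>d\<^sub>-\<^sub>1) / c\<^sub>0\<close>: a ring homomorphism into the
  polynomials, an integral domain, whose kernel consists of the multiples of the form.\<close>

lemma prime_elem_linear_form:
  assumes d: "0 < d" and c0: "c 0 \<noteq> 0"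
  shows "prime_elem (linear_form d c)"
proof (rule prime_elemI)
  define l where "l = linear_form d c"
  define R where "R = (\<Sum>j\<in>{1..<d}. Const (c j) * Var j)"
  define y where "y j = (if j = 0 then - Const (1 / c 0) * R else Var j)" for j
  have l_split: "l = Const (c 0) * Var 0 + R"
    using d by (simp add: l_def linear_form_def R_def sum.atLeast_Suc_lessThan atLeast0LessThan[symmetric])
  have "l dvd Var j - y j" for j
  proof (cases "j = 0")
    case True
    have "Var 0 - y 0 = Const (1 / c 0) * l"
      using c0 by (simp add: y_def l_split distrib_left flip: mult.assoc)
    then show ?thesis using True by simp
  qed (simp add: y_def)
  then have congr: "l dvd p - eval_hom Const y p" for p
    using eval_hom_Const_diff_dvd[of l Var y p] by (simp add: eval_hom_Const_Var)
  have "eval_hom Const y l = Const (c 0) * y 0 + R"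
    using d unfolding l_def eval_hom_linear_form[OF complex_ring_hom_Const] R_def
    by (simp add: y_def sum.atLeast_Suc_lessThan atLeast0LessThan[symmetric])
  also have "\<dots> = 0" using c0 by (simp add: y_def flip: mult.assoc)
  finally have root: "eval_hom Const y l = 0" .
  have dvd_iff: "l dvd p \<longleftrightarrow> eval_hom Const y p = 0" for p
  proof
    assume "l dvd p"
    then show "eval_hom Const y p = 0" by (auto elim!: dvdE simp: eval_hom_mult complex_ring_hom_Const root)
  next
    assume "eval_hom Const y p = 0"
    then show "l dvd p" using congr[of p] by simp
  qed
  show "linear_form d c \<noteq> 0" using linear_form_nonzero d c0 by blast
  show "\<not> linear_form d c dvd 1"
  proof
    assume "linear_form d c dvd 1"
    then obtain a where "linear_form d c = Const a" using dvd_1_iff_Const by blast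
    then show False using lookup_linear_form[of d c 0] d c0 by (simp add: Const_def lookup_single when_def)
  qed
  fix a b assume "linear_form d c dvd a * b"
  then show "linear_form d c dvd a \<or> linear_form d c dvd b"
    using dvd_iff unfolding l_def by (simp add: eval_hom_mult complex_ring_hom_Const)
qed

lemma prime_elem_dvd_prodD:
  fixes f :: "'b \<Rightarrow> 'a::comm_semiring_1"
  assumes "prime_elem p" "p dvd (\<Prod>t\<in>T. f t)"
  shows "\<exists>t\<in>T. p dvd f t"
  using assms(2)
proof (induction T rule: infinite_finite_induct)
  case (insert t T)
  then show ?case using prime_elem_dvd_multD[OF assms(1)] by auto
qed (use prime_elem_not_unit[OF assms(1)] in auto)

lemma factor_of_prod_prime_elems:
  fixes f :: "'b \<Rightarrow> 'a::idom"
  assumes "finite T" "\<And>t. t \<in> T \<Longrightarrow> prime_elem (f t)" "x * y = (\<Prod>t\<in>T. f t)"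
  shows "\<exists>S\<subseteq>T. \<exists>u. u dvd 1 \<and> x = u * (\<Prod>t\<in>S. f t)"
  using assms
proof (induction T arbitrary: x y rule: finite_induct)
  case empty
  then have "x dvd 1" by (metis dvdI prod.empty)
  then show ?case by auto
next
  case (insert t T)
  then have prime: "prime_elem (f t)" and "f t dvd x * y" by auto
  then consider "f t dvd x" | "f t dvd y" using prime_elem_dvd_multD by blast
  then show ?case
  proof cases
    case 1
    then obtain x' where x': "x = f t * x'" by (rule dvdE)
    have "f t * (x' * y) = f t * (\<Prod>t\<in>T. f t)" using insert x' by (simp add: mult.assoc)
    then have "x' * y = (\<Prod>t\<in>T. f t)" using prime by simp
    then obtain S u where "S \<subseteq> T" "u dvd 1" "x' = u * (\<Prod>t\<in>S. f t)" using insert by blast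
    moreover have "finite S" "t \<notin> S" using \<open>S \<subseteq> T\<close> insert finite_subset by auto
    ultimately show ?thesis using x' by (intro exI[of _ "insert t S"] exI[of _ u]) (auto simp: mult_ac)
  next
    case 2
    then obtain y' where y': "y = f t * y'" by (rule dvdE)
    have "f t * (x * y') = f t * (\<Prod>t\<in>T. f t)" using insert y' by (simp add: mult_ac)
    then have "x * y' = (\<Prod>t\<in>T. f t)" using prime by simp
    then show ?thesis using insert by blast
  qed
qed

lemma prod_prime_elems_subset:
  fixes f :: "'b \<Rightarrow> 'a::comm_semiring_1"
  assumes "S' \<subseteq> T" "\<And>t. t \<in> T \<Longrightarrow> prime_elem (f t)"
    and "\<And>s t. s \<in> T \<Longrightarrow> t \<in> T \<Longrightarrow> f s dvd f t \<Longrightarrow> s = t"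
    and "u' dvd 1" "u * (\<Prod>t\<in>S. f t) = u' * (\<Prod>t\<in>S'. f t)"
    and "finite S" "s \<in> S" "s \<in> T"
  shows "s \<in> S'"
proof -
  obtain v where v: "1 = u' * v" using assms(4) by (rule dvdE)
  have "(\<Prod>t\<in>S'. f t) = v * (u' * (\<Prod>t\<in>S'. f t))" by (metis v mult.assoc mult.commute mult_1)
  also have "\<dots> = v * (u * (\<Prod>t\<in>S. f t))" by (simp add: assms(5))
  moreover have "f s dvd (\<Prod>t\<in>S. f t)" using assms(6,7) by (rule dvd_prodI)
  ultimately have "f s dvd (\<Prod>t\<in>S'. f t)" by (simp add: dvd_mult)
  then obtain t where "t \<in> S'" "f s dvd f t" using prime_elem_dvd_prodD assms(2,8) by blast
  then show ?thesis using assms(1,3,8) by blast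
qed

lemma keys_prod_linear_forms:
  assumes "finite T" "m \<in> Poly_Mapping.keys (\<Prod>t\<in>T. linear_form d (c t))"
  shows "Poly_Mapping.keys m \<subseteq> {..<d}" "Poly_Mapping.lookup m i \<le> card T"
proof -
  have "Poly_Mapping.keys m \<subseteq> {..<d} \<and> (\<forall>i. Poly_Mapping.lookup m i \<le> card T)"
    using assms
  proof (induction T arbitrary: m rule: finite_induct)
    case (insert t T)
    then obtain a b where ab: "m = a + b" "a \<in> Poly_Mapping.keys (linear_form d (c t))"
        "b \<in> Poly_Mapping.keys (\<Prod>t\<in>T. linear_form d (c t))"
      using keys_mult by (fastforce simp: set_plus_def)
    obtain j where j: "a = Poly_Mapping.single j (Suc 0)" "j < d" using ab(2) keys_linear_form by blast
    have "Poly_Mapping.keys b \<subseteq> {..<d}" "\<forall>i. Poly_Mapping.lookup b i \<le> card T"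
      using insert ab by auto
    then show ?case
      using ab(1) j insert(1,2) by (auto simp: keys_monom_add lookup_add lookup_single when_def le_SucI)
  qed simp
  then show "Poly_Mapping.keys m \<subseteq> {..<d}" "Poly_Mapping.lookup m i \<le> card T" by auto
qed

lemma var_degree_prod_linear_forms:
  assumes "i < d" "\<And>t j. t \<in> T \<Longrightarrow> j < d \<Longrightarrow> c t j \<noteq> 0" "finite T"
  shows "var_degree i (\<Prod>t\<in>T. linear_form d (c t)) = card T"
  using assms(3,2)
proof (induction T rule: finite_induct)
  case (insert t T)
  have nonzero: "linear_form d (c t) \<noteq> 0" "(\<Prod>t\<in>T. linear_form d (c t)) \<noteq> 0"
    using insert assms(1) linear_form_nonzero by (force simp: prod_zero_iff)+
  have "var_degree i (\<Prod>t\<in>insert t T. linear_form d (c t)) =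
      var_degree i (linear_form d (c t)) + var_degree i (\<Prod>t\<in>T. linear_form d (c t))"
    using insert(1,2) var_degree_mult[OF nonzero] by simp
  then show ?case using insert assms(1) var_degree_linear_form[of d "c t" i] by simp
qed simp

definition keep_var :: "nat \<Rightarrow> mpoly \<Rightarrow> mpoly" where
  "keep_var i p = map_monoms (\<lambda>m. m) (\<lambda>m. if Poly_Mapping.keys m \<subseteq> {i} then 1 else 0) p"

lemma lookup_keep_var:
  "Poly_Mapping.lookup (keep_var i p) m = (if Poly_Mapping.keys m \<subseteq> {i} then Poly_Mapping.lookup p m else 0)"
  unfolding keep_var_def using lookup_map_monoms_inj[of "\<lambda>m. m" m p] by simp

lemma keep_var_mult: "keep_var i (a * b) = keep_var i a * keep_var i b"
  unfolding keep_var_def by (rule map_monoms_mult) (simp add: keys_monom_add)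

lemma keep_var_1: "keep_var i 1 = 1"
  unfolding keep_var_def by (rule map_monoms_1) simp_all

lemma keep_var_prod: "keep_var i (\<Prod>t\<in>T. P t) = (\<Prod>t\<in>T. keep_var i (P t))"
  by (induction T rule: infinite_finite_induct) (simp_all add: keep_var_mult keep_var_1)

lemma keep_var_linear_form:
  assumes "i < d"
  shows "keep_var i (linear_form d c) = Poly_Mapping.single (Poly_Mapping.single i (Suc 0)) (c i)"
proof -
  have "keep_var i (linear_form d c) = (\<Sum>j<d. Poly_Mapping.single (Poly_Mapping.single j (Suc 0))
      ((if Poly_Mapping.keys (Poly_Mapping.single j (Suc 0)) \<subseteq> {i} then 1 else 0) * c j))"
    by (simp add: keep_var_def linear_form_def Const_mult_Var map_monoms_sum)
  also have "\<dots> = (\<Sum>j<d. (Poly_Mapping.single (Poly_Mapping.single j (Suc 0)) (c j) when j = i))"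
    by (intro sum.cong refl) (auto simp: when_def)
  finally show ?thesis using assms by (simp add: when_def)
qed

lemma lookup_prod_linear_forms_power:
  assumes "i < d"
  shows "Poly_Mapping.lookup (\<Prod>t\<in>T. linear_form d (c t)) (Poly_Mapping.single i (card T)) = (\<Prod>t\<in>T. c t i)"
proof -
  have "(\<Sum>t\<in>T. Poly_Mapping.single i (Suc 0)) = Poly_Mapping.single i (card T)"
    by (rule poly_mapping_eqI) (simp only: lookup_sum lookup_single, simp add: when_def)
  then have "keep_var i (\<Prod>t\<in>T. linear_form d (c t)) =
      Poly_Mapping.single (Poly_Mapping.single i (card T)) (\<Prod>t\<in>T. c t i)"
    by (simp add: keep_var_prod keep_var_linear_form[OF assms] prod_single_mpoly)
  then show ?thesis
    using lookup_keep_var[of i "\<Prod>t\<in>T. linear_form d (c t)" "Poly_Mapping.single i (card T)"]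
    by (simp split: if_splits)
qed

section \<open>Reciprocal polynomials\<close>

definition monom_dvd :: "monom \<Rightarrow> monom \<Rightarrow> bool" where
  "monom_dvd m N \<longleftrightarrow> (\<forall>i. Poly_Mapping.lookup m i \<le> Poly_Mapping.lookup N i)"

lemma monom_dvd_diff_diff: "monom_dvd m N \<Longrightarrow> N - (N - m) = m"
  by (rule poly_mapping_eqI) (simp add: lookup_minus monom_dvd_def)

lemma keys_subset_of_monom_dvd:
  assumes "monom_dvd m N"
  shows "Poly_Mapping.keys m \<subseteq> Poly_Mapping.keys N"
proof
  fix i assume "i \<in> Poly_Mapping.keys m"
  with assms show "i \<in> Poly_Mapping.keys N" unfolding monom_dvd_def in_keys_iff by (metis le_zero_eq)
qed

definition reciprocal :: "monom \<Rightarrow> mpoly \<Rightarrow> mpoly" where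
  "reciprocal N p = map_monoms (\<lambda>m. N - m) (\<lambda>_. 1) p"

lemma reciprocal_single: "reciprocal N (Poly_Mapping.single m c) = Poly_Mapping.single (N - m) c"
  by (simp add: reciprocal_def)

lemma reciprocal_reciprocal:
  assumes "\<And>m. m \<in> Poly_Mapping.keys p \<Longrightarrow> monom_dvd m N"
  shows "reciprocal N (reciprocal N p) = p"
  unfolding reciprocal_def map_monoms_map_monoms
  by (rule map_monoms_id) (simp add: assms monom_dvd_diff_diff)

lemma reciprocal_mult:
  assumes "\<And>m. m \<in> Poly_Mapping.keys a \<Longrightarrow> monom_dvd m A" "\<And>m. m \<in> Poly_Mapping.keys b \<Longrightarrow> monom_dvd m B"
  shows "reciprocal (A + B) (a * b) = reciprocal A a * reciprocal B b"
  unfolding reciprocal_def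
proof (rule map_monoms_mult)
  fix m m' assume "m \<in> Poly_Mapping.keys a" "m' \<in> Poly_Mapping.keys b"
  then have "monom_dvd m A" "monom_dvd m' B" using assms by auto
  then have "A + B - (m + m') = (A - m) + (B - m')"
    by (intro poly_mapping_eqI) (simp add: lookup_minus lookup_add monom_dvd_def)
  then show "A + B - (m + m') = A - m + (B - m') \<and> (1::complex) = 1 * 1" by simp
qed

lemma keys_reciprocal: "Poly_Mapping.keys (reciprocal N p) \<subseteq> (\<lambda>m. N - m) ` Poly_Mapping.keys p"
  unfolding reciprocal_def by (rule keys_map_monoms_subset)

lemma lookup_reciprocal:
  assumes "\<And>m. m \<in> Poly_Mapping.keys p \<Longrightarrow> monom_dvd m N" "monom_dvd m N"
  shows "Poly_Mapping.lookup (reciprocal N p) (N - m) = Poly_Mapping.lookup p m"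
proof -
  have "inj_on (\<lambda>m. N - m) (insert m (Poly_Mapping.keys p))"
    using assms by (intro inj_onI) (metis insert_iff monom_dvd_diff_diff)
  then show ?thesis unfolding reciprocal_def using lookup_map_monoms_inj by fastforce
qed

lemma monom_eval_diff:
  fixes x :: "nat \<Rightarrow> 'a::field"
  assumes "monom_dvd m N" "\<And>i. i \<in> Poly_Mapping.keys N \<Longrightarrow> x i \<noteq> 0"
  shows "monom_eval x (N - m) = monom_eval x N * monom_eval (\<lambda>i. inverse (x i)) m"
proof -
  let ?K = "Poly_Mapping.keys N"
  have keys: "Poly_Mapping.keys m \<subseteq> ?K" "Poly_Mapping.keys (N - m) \<subseteq> ?K"
    using keys_subset_of_monom_dvd[OF assms(1)] by (auto simp: in_keys_iff lookup_minus)
  have "monom_eval x (N - m) = (\<Prod>i\<in>?K. x i ^ (Poly_Mapping.lookup N i - Poly_Mapping.lookup m i))"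
    by (simp add: monom_eval_superset[OF _ keys(2)] lookup_minus)
  also have "\<dots> = (\<Prod>i\<in>?K. x i ^ Poly_Mapping.lookup N i * inverse (x i) ^ Poly_Mapping.lookup m i)"
    using assms by (intro prod.cong refl) (simp add: monom_dvd_def power_diff power_inverse divide_inverse)
  also have "\<dots> = monom_eval x N * monom_eval (\<lambda>i. inverse (x i)) m"
    by (simp add: prod.distrib monom_eval_superset[OF _ keys(1)] monom_eval_def[of x N])
  finally show ?thesis .
qed

lemma mpoly_eval_reciprocal:
  assumes "\<And>m. m \<in> Poly_Mapping.keys p \<Longrightarrow> monom_dvd m N" "\<And>i. i \<in> Poly_Mapping.keys N \<Longrightarrow> x i \<noteq> 0"
  shows "mpoly_eval (reciprocal N p) x = monom_eval x N * mpoly_eval p (\<lambda>i. inverse (x i))"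
proof -
  have "mpoly_eval (reciprocal N p) x = (\<Sum>m\<in>Poly_Mapping.keys p. Poly_Mapping.lookup p m * monom_eval x (N - m))"
    by (simp add: mpoly_eval_eq_eval_hom reciprocal_def eval_hom_map_monoms[OF complex_ring_hom_id])
  also have "\<dots> = (\<Sum>m\<in>Poly_Mapping.keys p.
      Poly_Mapping.lookup p m * (monom_eval x N * monom_eval (\<lambda>i. inverse (x i)) m))"
    by (intro sum.cong refl) (simp add: monom_eval_diff assms)
  also have "\<dots> = monom_eval x N * mpoly_eval p (\<lambda>i. inverse (x i))"
    by (simp add: mpoly_eval_eq_eval_hom eval_hom_def sum_distrib_left mult_ac)
  finally show ?thesis .
qed

definition var_degrees :: "nat \<Rightarrow> mpoly \<Rightarrow> monom" where
  "var_degrees d p = (\<Sum>i<d. Poly_Mapping.single i (var_degree i p))"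

lemma lookup_var_degrees: "Poly_Mapping.lookup (var_degrees d p) i = (if i < d then var_degree i p else 0)"
  by (simp add: var_degrees_def lookup_sum lookup_single when_def)

lemma monom_dvd_var_degrees:
  assumes "m \<in> Poly_Mapping.keys p" "\<And>i. d \<le> i \<Longrightarrow> var_degree i p = 0"
  shows "monom_dvd m (var_degrees d p)"
  using var_degree_ge[OF assms(1)] assms(2)
  unfolding monom_dvd_def lookup_var_degrees by (metis not_le le_zero_eq)

text \<open>If the reciprocal of \<open>a\<close> is a unit, \<open>a\<close> is a monomial \<open>c X\<^bsup>A\<^esup>\<close>; a multiple of it
  that is divisible by no variable forces \<open>A = 0\<close>.\<close>

lemma dvd_1_of_reciprocal_dvd_1:
  assumes unit: "reciprocal (var_degrees d a) a dvd 1" and vars: "\<And>i. d \<le> i \<Longrightarrow> var_degree i a = 0"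
    and avoid: "\<And>i. i < d \<Longrightarrow> \<exists>m\<in>Poly_Mapping.keys (a * b). Poly_Mapping.lookup m i = 0"
  shows "a dvd 1"
proof -
  obtain c where c: "c \<noteq> 0" "reciprocal (var_degrees d a) a = Const c"
    using unit dvd_1_iff_Const by blast
  have "a = reciprocal (var_degrees d a) (reciprocal (var_degrees d a) a)"
    using monom_dvd_var_degrees vars by (simp add: reciprocal_reciprocal)
  then have a: "a = Poly_Mapping.single (var_degrees d a) c"
    using c(2) by (simp add: Const_def reciprocal_single)
  have "Poly_Mapping.lookup (var_degrees d a) i = 0" for i
  proof (cases "i < d")
    case True
    then obtain m where m: "m \<in> Poly_Mapping.keys (a * b)" "Poly_Mapping.lookup m i = 0"
      using avoid by blast
    then obtain a' b' where "m = a' + b'" "a' \<in> Poly_Mapping.keys a" using keys_mult by blast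
    then have "m = var_degrees d a + b'" using a c(1) by (metis empty_iff insert_iff keys_single)
    then show ?thesis using m(2) by (simp add: lookup_add)
  qed (simp add: lookup_var_degrees)
  then have "var_degrees d a = 0" by (simp add: poly_mapping_eqI)
  then have "a = Const c" using a by (simp add: Const_def)
  then show ?thesis using c(1) dvd_1_iff_Const by blast
qed

text \<open>A factorisation \<open>p = a b\<close> reflects to one of the reciprocal of \<open>p\<close>, since the
  degrees in each variable add up.\<close>

lemma irreducible_of_irreducible_reciprocal:
  assumes irr: "irreducible (reciprocal N p)" and "p \<noteq> 0"
    and deg: "\<And>i. var_degree i p = Poly_Mapping.lookup N i" and N: "Poly_Mapping.keys N \<subseteq> {..<d}"
    and avoid: "\<And>i. i < d \<Longrightarrow> \<exists>m\<in>Poly_Mapping.keys p. Poly_Mapping.lookup m i = 0"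
  shows "irreducible p"
proof (rule irreducibleI)
  show "p \<noteq> 0" by fact
  show "\<not> p dvd 1"
  proof
    assume "p dvd 1"
    then obtain c where "c \<noteq> 0" "p = Const c" using dvd_1_iff_Const by blast
    moreover from this have "N = 0" using deg var_degree_Const by (metis lookup_zero poly_mapping_eqI)
    ultimately have "reciprocal N p = Const c" by (simp add: Const_def reciprocal_single)
    then show False using irr irreducible_not_unit dvd_1_iff_Const \<open>c \<noteq> 0\<close> by blast
  qed
next
  fix a b assume ab: "p = a * b"
  then have "a \<noteq> 0" "b \<noteq> 0" using \<open>p \<noteq> 0\<close> by auto
  have deg_sum: "var_degree i a + var_degree i b = Poly_Mapping.lookup N i" for i
    using var_degree_mult[OF \<open>a \<noteq> 0\<close> \<open>b \<noteq> 0\<close>] ab deg by simp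
  have N0: "Poly_Mapping.lookup N i = 0" if "d \<le> i" for i using N that by (auto simp: in_keys_iff)
  then have vars: "var_degree i a = 0" "var_degree i b = 0" if "d \<le> i" for i
    using deg_sum[of i] that by auto
  have "var_degrees d a + var_degrees d b = N"
    using deg_sum N0 by (intro poly_mapping_eqI) (simp add: lookup_add lookup_var_degrees)
  moreover have "reciprocal (var_degrees d a + var_degrees d b) (a * b) =
      reciprocal (var_degrees d a) a * reciprocal (var_degrees d b) b"
    by (rule reciprocal_mult) (use monom_dvd_var_degrees vars in auto)
  ultimately have "reciprocal (var_degrees d a) a dvd 1 \<or> reciprocal (var_degrees d b) b dvd 1"
    using irr irreducibleD ab by metis
  then show "a dvd 1 \<or> b dvd 1"
    using dvd_1_of_reciprocal_dvd_1[of d a b] dvd_1_of_reciprocal_dvd_1[of d b a] vars avoid ab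
    by (metis mult.commute)
qed

section \<open>Roots of unity and the grid\<close>

lemma rho_nonzero [simp]: "rho q j k \<noteq> 0"
  by (simp add: rho_def)

lemma rho_add: "rho q j (k + l) = rho q j k * rho q j l"
  by (simp add: rho_def mult_exp_exp add_divide_distrib distrib_left distrib_right)

lemma rho_power: "rho q j k ^ t = rho q j (k * t)"
  by (induction t) (simp_all add: rho_def[of q j 0] rho_add)

lemma rho_eq_1_iff: "0 < q j \<Longrightarrow> rho q j k = 1 \<longleftrightarrow> q j dvd k"
proof -
  assume q: "0 < q j"
  have "rho q j k = 1 \<longleftrightarrow> (\<exists>n::int. 2 * pi * real k / real (q j) = of_int (2 * n) * pi)"
    unfolding rho_def exp_eq_1 by simp
  also have "\<dots> \<longleftrightarrow> (\<exists>n::int. real k = real (q j) * of_int n)"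
    using q by (intro ex_cong1) (auto simp: field_simps)
  also have "\<dots> \<longleftrightarrow> (\<exists>n::int. int k = int (q j) * n)"
    by (intro ex_cong1) (metis of_int_eq_iff of_int_mult of_int_of_nat_eq)
  also have "\<dots> \<longleftrightarrow> int (q j) dvd int k" by (auto simp: dvd_def)
  also have "\<dots> \<longleftrightarrow> q j dvd k" by simp
  finally show ?thesis .
qed

lemma rho_mod: "0 < q j \<Longrightarrow> rho q j (k mod q j) = rho q j k"
  using rho_add[of q j "k mod q j" "q j * (k div q j)"] rho_eq_1_iff[of q j "q j * (k div q j)"] by simp

lemma rho_inj:
  assumes "0 < q j" "k < q j" "l < q j" "rho q j k = rho q j l"
  shows "k = l"
proof -
  have "rho q j (k + (q j - l)) = rho q j (l + (q j - l))" by (simp add: rho_add assms(4))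
  also have "\<dots> = 1" using assms by (simp add: rho_eq_1_iff)
  finally have "q j dvd k + (q j - l)" using assms(1) rho_eq_1_iff by blast
  then show ?thesis
  proof (cases "l \<le> k")
    case True
    then have "q j dvd k - l" using \<open>q j dvd k + (q j - l)\<close> assms(3)
      by (metis add.commute dvd_add_right_iff dvd_refl le_add_diff_inverse2 less_imp_le_nat
          diff_add_assoc2)
    then show ?thesis using True assms(2) by (meson diff_less_mono dvd_imp_le not_less le_antisym
          zero_less_diff le_less_trans diff_le_self)
  next
    case False
    then show ?thesis using \<open>q j dvd k + (q j - l)\<close> assms(3) by (simp add: nat_dvd_not_less)
  qed
qed

lemma power_Gcd_eq_1:
  fixes c :: "'a::monoid_mult"
  assumes "finite A" "\<And>a. a \<in> A \<Longrightarrow> c ^ a = 1"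
  shows "c ^ Gcd A = 1"
  using assms
proof (induction A rule: finite_induct)
  case (insert a A)
  then have ca: "c ^ a = 1" and cg: "c ^ Gcd A = 1" by auto
  show ?case
  proof (cases "a = 0")
    case False
    then obtain x y where xy: "a * x = Gcd A * y + gcd a (Gcd A)" using bezout_nat by blast
    have "1 = (c ^ a) ^ x" using ca by simp
    also have "\<dots> = (c ^ Gcd A) ^ y * c ^ gcd a (Gcd A)" by (simp add: xy power_add flip: power_mult)
    finally show ?thesis using cg by (simp add: Gcd_insert)
  qed (use cg in \<open>simp add: Gcd_insert\<close>)
qed simp

lemma mem_WsetD: "n \<in> Wset d q \<Longrightarrow> j < d \<Longrightarrow> n j < q j"
  by (auto simp: Wset_def PiE_iff)

lemma fun_upd_mem_Wset: "n \<in> Wset d q \<Longrightarrow> i < d \<Longrightarrow> v < q i \<Longrightarrow> n(i := v) \<in> Wset d q"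
  by (auto simp: Wset_def PiE_iff extensional_def)

lemma finite_Wset: "finite (Wset d q)"
  unfolding Wset_def by (rule finite_PiE) auto

lemma card_Wset: "card (Wset d q) = Qprod d q"
  by (simp add: Wset_def card_PiE Qprod_def)

lemma q_dvd_Qprod: "i < d \<Longrightarrow> q i dvd Qprod d q"
  by (simp add: Qprod_def dvd_prodI)

definition cyclic_shift :: "(nat \<Rightarrow> nat) \<Rightarrow> nat \<Rightarrow> (nat \<Rightarrow> nat) \<Rightarrow> (nat \<Rightarrow> nat)" where
  "cyclic_shift q i n = n(i := (n i + 1) mod q i)"

lemma bij_betw_cyclic_shift:
  assumes "i < d" "0 < q i"
  shows "bij_betw (cyclic_shift q i) (Wset d q) (Wset d q)"
proof (rule bij_betw_byWitness[where f' = "\<lambda>n. n(i := (n i + (q i - 1)) mod q i)"])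
  have left_inv: "((k + 1) mod q i + (q i - 1)) mod q i = k" if "k < q i" for k
  proof -
    have "((k + 1) mod q i + (q i - 1)) mod q i = (k + 1 + (q i - 1)) mod q i" by (rule mod_add_left_eq)
    also have "k + 1 + (q i - 1) = k + q i" using that by simp
    finally show ?thesis using that by simp
  qed
  have right_inv: "((k + (q i - 1)) mod q i + 1) mod q i = k" if "k < q i" for k
  proof -
    have "((k + (q i - 1)) mod q i + 1) mod q i = (k + (q i - 1) + 1) mod q i" by (rule mod_add_left_eq)
    also have "k + (q i - 1) + 1 = k + q i" using that by simp
    finally show ?thesis using that by simp
  qed
  show "\<forall>n\<in>Wset d q. (cyclic_shift q i n)(i := (cyclic_shift q i n i + (q i - 1)) mod q i) = n"
  proof
    fix n assume "n \<in> Wset d q"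
    from left_inv[OF mem_WsetD[OF this assms(1)]]
    show "(cyclic_shift q i n)(i := (cyclic_shift q i n i + (q i - 1)) mod q i) = n"
      unfolding cyclic_shift_def by (simp only: fun_upd_upd fun_upd_same fun_upd_triv)
  qed
  show "\<forall>n\<in>Wset d q. cyclic_shift q i (n(i := (n i + (q i - 1)) mod q i)) = n"
  proof
    fix n assume "n \<in> Wset d q"
    from right_inv[OF mem_WsetD[OF this assms(1)]]
    show "cyclic_shift q i (n(i := (n i + (q i - 1)) mod q i)) = n"
      unfolding cyclic_shift_def by (simp only: fun_upd_upd fun_upd_same fun_upd_triv)
  qed
  show "cyclic_shift q i ` Wset d q \<subseteq> Wset d q" "(\<lambda>n. n(i := (n i + (q i - 1)) mod q i)) ` Wset d q \<subseteq> Wset d q"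
    using assms by (auto simp: cyclic_shift_def intro!: fun_upd_mem_Wset)
qed

lemma fun_upd_mem_if_shift_closed:
  assumes S: "S \<subseteq> Wset d q" and closed: "cyclic_shift q i ` S \<subseteq> S"
    and "n \<in> S" "i < d" "k < q i"
  shows "n(i := k) \<in> S"
proof -
  have iterate: "n(i := (n i + t) mod q i) \<in> S" for t
  proof (induction t)
    case 0
    have "n i < q i" using mem_WsetD \<open>n \<in> S\<close> \<open>i < d\<close> S by blast
    then show ?case using \<open>n \<in> S\<close> by simp
  next
    case (Suc t)
    then have "cyclic_shift q i (n(i := (n i + t) mod q i)) \<in> S" using closed by blast
    moreover have "cyclic_shift q i (n(i := (n i + t) mod q i)) = n(i := (n i + Suc t) mod q i)"
      by (simp add: cyclic_shift_def mod_Suc_eq)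
    ultimately show ?case by (metis add_Suc_right)
  qed
  have "n i < q i" using mem_WsetD \<open>n \<in> S\<close> \<open>i < d\<close> S by blast
  then have "(n i + (k + q i - n i)) mod q i = k" using \<open>k < q i\<close> by simp
  then show ?thesis using iterate[of "k + q i - n i"] by simp
qed

text \<open>Changing one coordinate at a time moves any point of the grid to any other.\<close>

lemma Wset_subset_if_shift_closed:
  assumes S: "S \<subseteq> Wset d q" and closed: "\<And>i. i < d \<Longrightarrow> cyclic_shift q i ` S \<subseteq> S" and "n \<in> S"
  shows "Wset d q \<subseteq> S"
proof
  fix m assume m: "m \<in> Wset d q"
  define mix where "mix j = (\<lambda>x. if x < j then m x else n x)" for j
  have "mix j \<in> S" if "j \<le> d" for j
    using that
  proof (induction j)
    case 0
    then show ?case using \<open>n \<in> S\<close> by (simp add: mix_def)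
  next
    case (Suc j)
    have "mix (Suc j) = (mix j)(j := m j)" by (rule ext) (simp add: mix_def)
    moreover have "(mix j)(j := m j) \<in> S"
      using fun_upd_mem_if_shift_closed[OF S closed] Suc mem_WsetD[OF m] by simp
    ultimately show ?case by metis
  qed
  moreover have "mix d = m"
  proof (rule ext)
    fix x
    show "mix d x = m x"
    proof (cases "x < d")
      case False
      have "n x = undefined" using \<open>n \<in> S\<close> S False unfolding Wset_def by (intro PiE_arb[of n "{..<d}"]) auto
      moreover have "m x = undefined" using m False unfolding Wset_def by (intro PiE_arb[of m "{..<d}"]) auto
      ultimately show ?thesis using False by (simp add: mix_def)
    qed (simp add: mix_def)
  qed
  ultimately show "m \<in> S" by auto
qed

definition reflect_coord :: "(nat \<Rightarrow> nat) \<Rightarrow> nat \<Rightarrow> (nat \<Rightarrow> nat) \<Rightarrow> (nat \<Rightarrow> nat)" where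
  "reflect_coord q i n = n(i := (q i - n i) mod q i)"

lemma bij_betw_reflect_coord:
  assumes "i < d"
  shows "bij_betw (reflect_coord q i) (Wset d q) (Wset d q)"
proof (rule bij_betw_byWitness[where f' = "reflect_coord q i"])
  have "reflect_coord q i (reflect_coord q i n) = n" if "n \<in> Wset d q" for n
  proof -
    have "n i < q i" using mem_WsetD[OF that assms] .
    then have "(q i - (q i - n i) mod q i) mod q i = n i" by (cases "n i = 0") (simp_all add: mod_if)
    then show ?thesis by (simp add: reflect_coord_def)
  qed
  then show "\<forall>n\<in>Wset d q. reflect_coord q i (reflect_coord q i n) = n" by blast
  then show "\<forall>n\<in>Wset d q. reflect_coord q i (reflect_coord q i n) = n" .
  have "reflect_coord q i n \<in> Wset d q" if "n \<in> Wset d q" for n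
    unfolding reflect_coord_def using mem_WsetD[OF that assms] assms
    by (intro fun_upd_mem_Wset[OF that assms]) simp
  then show "reflect_coord q i ` Wset d q \<subseteq> Wset d q" by blast
  then show "reflect_coord q i ` Wset d q \<subseteq> Wset d q" .
qed

lemma rho_reflect: "0 < q j \<Longrightarrow> k \<le> q j \<Longrightarrow> rho q j ((q j - k) mod q j) * rho q j k = 1"
  by (simp add: rho_mod rho_add[symmetric] rho_eq_1_iff)

lemma prod_reflect_coord_rho:
  assumes "i < d" "\<And>n. S (reflect_coord q i n) = S n"
  shows "(\<Prod>n\<in>Wset d q. x / rho q i (n i) + S n) = (\<Prod>n\<in>Wset d q. rho q i (n i) * x + S n)"
proof -
  have "x / rho q i (reflect_coord q i n i) + S (reflect_coord q i n) = rho q i (n i) * x + S n"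
    if "n \<in> Wset d q" for n
  proof -
    have "n i < q i" using mem_WsetD[OF that assms(1)] .
    then have "rho q i (reflect_coord q i n i) * rho q i (n i) = 1"
      using rho_reflect[of q i "n i"] by (simp add: reflect_coord_def)
    then show ?thesis by (simp add: assms(2) field_simps)
  qed
  then show ?thesis
    using prod.reindex_bij_betw[OF bij_betw_reflect_coord[of i d q, OF assms(1)], of "\<lambda>n. x / rho q i (n i) + S n"]
    by (simp cong: prod.cong)
qed

section \<open>The product of the linear forms\<close>

locale cyclic_grid =
  fixes d :: nat and q :: "nat \<Rightarrow> nat"
  assumes two_le_d: "2 \<le> d" and q_pos: "\<And>j. j < d \<Longrightarrow> 0 < q j"
    and Gcd_q: "Gcd (q ` {..<d}) = 1"
begin

abbreviation W where "W \<equiv> Wset d q"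

definition lin :: "(nat \<Rightarrow> nat) \<Rightarrow> mpoly" where
  "lin n = linear_form d (\<lambda>j. inverse (rho q j (n j)))"

lemma prime_elem_lin: "prime_elem (lin n)"
  unfolding lin_def using two_le_d by (intro prime_elem_linear_form) auto

text \<open>Two of the linear forms can only be proportional by a scalar \<open>a\<close> with \<open>a ^ q\<^sub>j = 1\<close>
  for all \<open>j\<close>; as the \<open>q\<^sub>j\<close> are coprime, \<open>a = 1\<close>.\<close>

lemma lin_dvd_lin_imp_eq:
  assumes n: "n \<in> W" and m: "m \<in> W" and dvd: "lin n dvd lin m"
  shows "n = m"
proof -
  obtain a where a: "\<And>j. j < d \<Longrightarrow> inverse (rho q j (m j)) = a * inverse (rho q j (n j))"
    using linear_form_dvd_linear_formD[OF _ _ _ dvd[unfolded lin_def]] two_le_d by auto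
  have "a ^ k = 1" if k: "k \<in> q ` {..<d}" for k
  proof -
    obtain j where j: "j < d" "k = q j" using k by auto
    have "a = rho q j (n j) * inverse (rho q j (m j))" using a[OF j(1)] by (simp add: field_simps)
    then have "a ^ k = rho q j (n j * q j) * inverse (rho q j (m j * q j))"
      by (simp add: j(2) power_mult_distrib rho_power power_inverse)
    then show ?thesis
      using rho_eq_1_iff[of q j "n j * q j"] rho_eq_1_iff[of q j "m j * q j"] q_pos[OF j(1)] by simp
  qed
  then have "a = 1" using power_Gcd_eq_1[of "q ` {..<d}" a] Gcd_q by simp
  show ?thesis
  proof (rule PiE_ext)
    show "n \<in> PiE {..<d} (\<lambda>j. {..<q j})" "m \<in> PiE {..<d} (\<lambda>j. {..<q j})"
      using n m by (simp_all add: Wset_def)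
    fix j assume "j \<in> {..<d}"
    then have j: "j < d" by simp
    have "rho q j (m j) = rho q j (n j)" using a[OF j] \<open>a = 1\<close> by simp
    then show "n j = m j" using rho_inj[of q j, OF q_pos[OF j]] mem_WsetD[OF n j] mem_WsetD[OF m j] by metis
  qed
qed

definition lin_prod :: mpoly where
  "lin_prod = (\<Prod>n\<in>W. lin n)"

lemma lin_prod_nonzero: "lin_prod \<noteq> 0"
  unfolding lin_prod_def using finite_Wset prime_elem_not_zeroI[OF prime_elem_lin]
  by (simp add: prod_zero_iff)

lemma var_degree_lin_prod: "i < d \<Longrightarrow> var_degree i lin_prod = Qprod d q"
  unfolding lin_prod_def lin_def
  by (subst var_degree_prod_linear_forms) (simp_all add: finite_Wset card_Wset)

lemma keys_lin_prod:
  assumes "m \<in> Poly_Mapping.keys lin_prod"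
  shows "Poly_Mapping.keys m \<subseteq> {..<d}" "Poly_Mapping.lookup m i \<le> Qprod d q"
  using keys_prod_linear_forms[OF finite_Wset assms[unfolded lin_prod_def lin_def]]
  by (simp_all add: card_Wset)

definition rotate_var :: "nat \<Rightarrow> mpoly \<Rightarrow> mpoly" where
  "rotate_var i p = map_monoms (\<lambda>m. m) (\<lambda>m. inverse (rho q i 1) ^ Poly_Mapping.lookup m i) p"

lemma lookup_rotate_var:
  "Poly_Mapping.lookup (rotate_var i p) m = inverse (rho q i 1) ^ Poly_Mapping.lookup m i * Poly_Mapping.lookup p m"
  unfolding rotate_var_def using lookup_map_monoms_inj[of "\<lambda>m. m" m p] by simp

lemma rotate_var_mult: "rotate_var i (a * b) = rotate_var i a * rotate_var i b"
  unfolding rotate_var_def by (rule map_monoms_mult) (simp add: lookup_add power_add)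

lemma rotate_var_Const: "rotate_var i (Const c) = Const c"
  by (simp add: rotate_var_def Const_def)

lemma rotate_var_1: "rotate_var i 1 = 1"
  unfolding rotate_var_def by (rule map_monoms_1) simp_all

lemma rotate_var_prod: "rotate_var i (\<Prod>n\<in>T. P n) = (\<Prod>n\<in>T. rotate_var i (P n))"
  by (induction T rule: infinite_finite_induct) (simp_all add: rotate_var_mult rotate_var_1)

lemma rotate_var_lin:
  assumes "i < d"
  shows "rotate_var i (lin n) = lin (cyclic_shift q i n)"
proof -
  have "inverse (rho q i 1) ^ Poly_Mapping.lookup (Poly_Mapping.single j (Suc 0)) i * inverse (rho q j (n j)) =
        inverse (rho q j (cyclic_shift q i n j))" for j
  proof (cases "j = i")
    case True
    have "inverse (rho q i 1) * inverse (rho q i (n i)) = inverse (rho q i (n i + 1))"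
      by (metis inverse_mult_distrib rho_add mult.commute)
    also have "\<dots> = inverse (rho q i ((n i + 1) mod q i))"
      using rho_mod[of q i "n i + 1", OF q_pos[OF assms]] by simp
    finally show ?thesis using True by (simp add: cyclic_shift_def)
  qed (simp add: cyclic_shift_def lookup_single)
  then show ?thesis
    by (simp add: rotate_var_def lin_def linear_form_def Const_mult_Var map_monoms_sum)
qed

lemma rotate_var_lin_prod:
  assumes "i < d"
  shows "rotate_var i lin_prod = lin_prod"
proof -
  have "bij_betw (cyclic_shift q i) W W" using bij_betw_cyclic_shift assms q_pos by blast
  then show ?thesis
    unfolding lin_prod_def rotate_var_prod rotate_var_lin[OF assms] by (rule prod.reindex_bij_betw)
qed

text \<open>Invariance under \<open>X\<^sub>i \<mapsto> \<rho>\<^sub>i\<^sup>-\<^sup>1 X\<^sub>i\<close> forces every exponent of \<open>X\<^sub>i\<close> to be a multiple of \<open>q\<^sub>i\<close>.\<close>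

lemma q_dvd_lookup_of_keys_lin_prod:
  assumes "m \<in> Poly_Mapping.keys lin_prod" "i < d"
  shows "q i dvd Poly_Mapping.lookup m i"
proof -
  have "Poly_Mapping.lookup lin_prod m \<noteq> 0" using assms by (simp add: in_keys_iff)
  moreover have "Poly_Mapping.lookup lin_prod m =
      inverse (rho q i 1) ^ Poly_Mapping.lookup m i * Poly_Mapping.lookup lin_prod m"
    using lookup_rotate_var[of i lin_prod m] rotate_var_lin_prod[OF assms(2)] by simp
  ultimately have "rho q i (Poly_Mapping.lookup m i) = 1"
    by (simp add: rho_power power_inverse)
  then show ?thesis using rho_eq_1_iff[of q i, OF q_pos[OF assms(2)]] by simp
qed

definition subst_exp :: "nat \<Rightarrow> nat" where
  "subst_exp i = (if i < d then q i else 1)"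

lemma subst_exp_pos: "0 < subst_exp i"
  using q_pos by (simp add: subst_exp_def)

definition scale_monom :: "monom \<Rightarrow> monom" where
  "scale_monom m = Poly_Mapping.mapp (\<lambda>i k. subst_exp i * k) m"

definition unscale_monom :: "monom \<Rightarrow> monom" where
  "unscale_monom m = Poly_Mapping.mapp (\<lambda>i k. k div subst_exp i) m"

lemma lookup_scale_monom: "Poly_Mapping.lookup (scale_monom m) i = subst_exp i * Poly_Mapping.lookup m i"
  by (simp add: scale_monom_def lookup_mapp when_def in_keys_iff)

lemma lookup_unscale_monom: "Poly_Mapping.lookup (unscale_monom m) i = Poly_Mapping.lookup m i div subst_exp i"
  by (simp add: unscale_monom_def lookup_mapp when_def in_keys_iff)

lemma scale_monom_add: "scale_monom (m + m') = scale_monom m + scale_monom m'"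
  by (rule poly_mapping_eqI) (simp add: lookup_scale_monom lookup_add distrib_left)

lemma scale_monom_eq_iff: "scale_monom m = scale_monom m' \<longleftrightarrow> m = m'"
proof
  assume "scale_monom m = scale_monom m'"
  then have "subst_exp i * Poly_Mapping.lookup m i = subst_exp i * Poly_Mapping.lookup m' i" for i
    by (metis lookup_scale_monom)
  then show "m = m'" using subst_exp_pos by (intro poly_mapping_eqI) (metis mult_cancel_left not_gr0)
qed simp

lemma scale_monom_0 [simp]: "scale_monom 0 = 0"
  by (rule poly_mapping_eqI) (simp add: lookup_scale_monom)

lemma scale_monom_eq_0_iff: "scale_monom m = 0 \<longleftrightarrow> m = 0"
  using scale_monom_eq_iff[of m 0] by simp

definition subst_powers :: "mpoly \<Rightarrow> mpoly" where
  "subst_powers p = map_monoms scale_monom (\<lambda>_. 1) p"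

lemma subst_powers_mult: "subst_powers (a * b) = subst_powers a * subst_powers b"
  unfolding subst_powers_def by (rule map_monoms_mult) (simp add: scale_monom_add)

lemma subst_powers_0 [simp]: "subst_powers 0 = 0"
  by (simp add: subst_powers_def)

lemma subst_powers_Const: "subst_powers (Const c) = Const c"
  using scale_monom_eq_0_iff by (simp add: subst_powers_def Const_def)

lemma lookup_subst_powers: "Poly_Mapping.lookup (subst_powers p) (scale_monom m) = Poly_Mapping.lookup p m"
  unfolding subst_powers_def
  by (subst lookup_map_monoms_inj) (auto simp: inj_on_def scale_monom_eq_iff)

lemma subst_powers_eq_ConstD:
  assumes "subst_powers a = Const c"
  shows "a = Const c"
proof (rule poly_mapping_eqI)
  fix m
  have "Poly_Mapping.lookup a m = Poly_Mapping.lookup (Const c) (scale_monom m)"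
    using lookup_subst_powers[of a m] assms by simp
  then show "Poly_Mapping.lookup a m = Poly_Mapping.lookup (Const c) m"
    by (simp add: Const_def lookup_single when_def scale_monom_eq_0_iff eq_commute[of 0])
qed

lemma rotate_var_subst_powers:
  assumes "i < d"
  shows "rotate_var i (subst_powers a) = subst_powers a"
  unfolding rotate_var_def subst_powers_def map_monoms_map_monoms
proof (rule map_monoms_cong)
  fix m
  have "rho q i (Poly_Mapping.lookup (scale_monom m) i) = 1"
    using assms rho_eq_1_iff[of q i, OF q_pos[OF assms]] by (simp add: lookup_scale_monom subst_exp_def)
  then show "scale_monom m = scale_monom m \<and>
      inverse (rho q i 1) ^ Poly_Mapping.lookup (scale_monom m) i * 1 = 1"
    by (simp add: rho_power power_inverse)
qed

definition lin_prod_reduced :: mpoly where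
  "lin_prod_reduced = map_monoms unscale_monom (\<lambda>_. 1) lin_prod"

lemma subst_powers_lin_prod_reduced: "subst_powers lin_prod_reduced = lin_prod"
  unfolding subst_powers_def lin_prod_reduced_def map_monoms_map_monoms
proof (rule map_monoms_id)
  fix m assume m: "m \<in> Poly_Mapping.keys lin_prod"
  have "scale_monom (unscale_monom m) = m"
  proof (rule poly_mapping_eqI)
    fix i
    show "Poly_Mapping.lookup (scale_monom (unscale_monom m)) i = Poly_Mapping.lookup m i"
      using q_dvd_lookup_of_keys_lin_prod[OF m]
      by (cases "i < d") (simp_all add: lookup_scale_monom lookup_unscale_monom subst_exp_def)
  qed
  then show "scale_monom (unscale_monom m) = m \<and> 1 * 1 = (1::complex)" by simp
qed

text \<open>The rotation \<^term>\<open>rotate_var i\<close> fixes every polynomial in the \<open>q\<^sub>i\<close>-th powers and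
  permutes the linear forms by the cyclic shift; by unique factorisation into the pairwise
  non-associated primes \<^term>\<open>lin n\<close>, the index set of such a factor is shift-closed.\<close>

lemma shift_closed_of_factor:
  assumes S: "S \<subseteq> W" and u: "u dvd 1" and a: "subst_powers a = u * (\<Prod>n\<in>S. lin n)" and i: "i < d"
  shows "cyclic_shift q i ` S \<subseteq> S"
proof
  fix n' assume "n' \<in> cyclic_shift q i ` S"
  then obtain n where n: "n \<in> S" "n' = cyclic_shift q i n" by blast
  have bij: "bij_betw (cyclic_shift q i) W W" using bij_betw_cyclic_shift i q_pos by blast
  then have inj: "inj_on (cyclic_shift q i) S" using S bij_betw_imp_inj_on inj_on_subset by blast
  have "u * (\<Prod>n\<in>S. lin n) = rotate_var i (subst_powers a)"
    using rotate_var_subst_powers[OF i, of a] by (simp add: a)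
  also have "\<dots> = u * (\<Prod>n\<in>cyclic_shift q i ` S. lin n)"
    using u by (auto simp: a rotate_var_mult rotate_var_prod rotate_var_lin[OF i]
        dvd_1_iff_Const rotate_var_Const prod.reindex[OF inj])
  finally have eq: "u * (\<Prod>n\<in>cyclic_shift q i ` S. lin n) = u * (\<Prod>n\<in>S. lin n)" ..
  have "finite S" using S finite_Wset finite_subset by blast
  show "n' \<in> S"
  proof (rule prod_prime_elems_subset[of S W lin u u "cyclic_shift q i ` S" n'])
    show "n' \<in> W" using n S bij bij_betw_imp_surj_on by blast
  qed (use S u eq n \<open>finite S\<close> prime_elem_lin lin_dvd_lin_imp_eq in auto)
qed

lemma irreducible_lin_prod_reduced: "irreducible lin_prod_reduced"
proof (rule irreducibleI)
  show "lin_prod_reduced \<noteq> 0"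
    using subst_powers_lin_prod_reduced lin_prod_nonzero by auto
  show "\<not> lin_prod_reduced dvd 1"
  proof
    assume "lin_prod_reduced dvd 1"
    then obtain c where "c \<noteq> 0" "lin_prod_reduced = Const c" using dvd_1_iff_Const by blast
    then have "var_degree 0 lin_prod = 0"
      using subst_powers_lin_prod_reduced subst_powers_Const var_degree_Const by metis
    moreover have "0 < Qprod d q" unfolding Qprod_def using q_pos by (simp add: prod_pos)
    ultimately show False using var_degree_lin_prod[of 0] two_le_d by simp
  qed
  fix a b assume ab: "lin_prod_reduced = a * b"
  then have factors: "subst_powers a * subst_powers b = (\<Prod>n\<in>W. lin n)"
    using subst_powers_lin_prod_reduced subst_powers_mult lin_prod_def by metis
  obtain S u where S: "S \<subseteq> W" and u: "u dvd 1" and a: "subst_powers a = u * (\<Prod>n\<in>S. lin n)"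
    using factor_of_prod_prime_elems[OF finite_Wset prime_elem_lin factors] by blast
  show "a dvd 1 \<or> b dvd 1"
  proof (cases "S = {}")
    case True
    then have "a = u" using a subst_powers_eq_ConstD u dvd_1_iff_Const by (metis mult_1_right prod.empty)
    then show ?thesis using u by simp
  next
    case False
    then have "S = W" using Wset_subset_if_shift_closed[OF S shift_closed_of_factor[OF S u a]] S by blast
    then have "lin_prod * (u * subst_powers b) = lin_prod * 1"
      using a factors by (simp add: lin_prod_def mult_ac)
    then have "u * subst_powers b = 1" using lin_prod_nonzero by simp
    then obtain c where "c \<noteq> 0" "subst_powers b = Const c"
      using dvd_1_iff_Const by (metis dvd_triv_right)
    then show ?thesis using subst_powers_eq_ConstD dvd_1_iff_Const by blast
  qed
qed

section \<open>The polynomials \<open>h\<^sub>1\<close> and \<open>h\<^sub>2\<close>\<close>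

definition top_exps :: monom where
  "top_exps = (\<Sum>i<d. Poly_Mapping.single i (Qprod d q div q i))"

lemma lookup_top_exps: "Poly_Mapping.lookup top_exps i = (if i < d then Qprod d q div q i else 0)"
  by (simp add: top_exps_def lookup_sum lookup_single when_def)

lemma keys_top_exps: "Poly_Mapping.keys top_exps \<subseteq> {..<d}"
  by (auto simp: in_keys_iff lookup_top_exps split: if_splits)

definition axis_monom :: "nat \<Rightarrow> monom" where
  "axis_monom i = Poly_Mapping.single i (Qprod d q div q i)"

lemma lookup_top_exps_minus_axis_monom:
  "j < d \<Longrightarrow> Poly_Mapping.lookup (top_exps - axis_monom j) i = (if i = j then 0 else Poly_Mapping.lookup top_exps i)"
  by (simp add: lookup_minus axis_monom_def lookup_single when_def lookup_top_exps)

lemma monom_dvd_top_exps_of_keys_lin_prod_reduced: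
  assumes "m \<in> Poly_Mapping.keys lin_prod_reduced"
  shows "monom_dvd m top_exps"
proof -
  obtain m' where m': "m' \<in> Poly_Mapping.keys lin_prod" "m = unscale_monom m'"
    using assms keys_map_monoms_subset unfolding lin_prod_reduced_def by blast
  have "Poly_Mapping.lookup m' i = 0" if "\<not> i < d" for i
    using keys_lin_prod(1)[OF m'(1)] that by (auto simp: in_keys_iff)
  then show ?thesis
    using keys_lin_prod(2)[OF m'(1)]
    by (auto simp: monom_dvd_def m'(2) lookup_unscale_monom lookup_top_exps subst_exp_def intro: div_le_mono)
qed

lemma axis_monom_in_keys_lin_prod_reduced:
  assumes "i < d"
  shows "axis_monom i \<in> Poly_Mapping.keys lin_prod_reduced"
proof -
  have "scale_monom (axis_monom i) = Poly_Mapping.single i (card W)"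
    using assms q_dvd_Qprod[OF assms]
    by (intro poly_mapping_eqI) (auto simp: axis_monom_def lookup_scale_monom lookup_single when_def subst_exp_def card_Wset)
  then have "Poly_Mapping.lookup lin_prod_reduced (axis_monom i) = (\<Prod>n\<in>W. inverse (rho q i (n i)))"
    using lookup_subst_powers[of lin_prod_reduced "axis_monom i"] subst_powers_lin_prod_reduced
      lookup_prod_linear_forms_power[OF assms, of "\<lambda>n j. inverse (rho q j (n j))" W]
    by (simp add: lin_prod_def lin_def)
  then show ?thesis using finite_Wset by (simp add: in_keys_iff)
qed

text \<open>\<open>h\<^sub>1(w) = w\<^bsup>N\<^esup> g(1/w)\<close> with \<open>N\<^sub>i = Q / q\<^sub>i\<close>, where \<open>G(X) = g(X\<^sub>0\<^bsup>q\<^sub>0\<^esup>, \<dots>)\<close> is the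
  product of the linear forms.\<close>

definition h1 :: mpoly where
  "h1 = reciprocal top_exps lin_prod_reduced"

lemma reciprocal_h1: "reciprocal top_exps h1 = lin_prod_reduced"
  unfolding h1_def by (rule reciprocal_reciprocal) (rule monom_dvd_top_exps_of_keys_lin_prod_reduced)

lemma top_exps_minus_axis_monom_in_keys_h1:
  assumes "j < d"
  shows "top_exps - axis_monom j \<in> Poly_Mapping.keys h1"
proof -
  have "monom_dvd (axis_monom j) top_exps"
    by (rule monom_dvd_top_exps_of_keys_lin_prod_reduced[OF axis_monom_in_keys_lin_prod_reduced[OF assms]])
  have "Poly_Mapping.lookup h1 (top_exps - axis_monom j) = Poly_Mapping.lookup lin_prod_reduced (axis_monom j)"
    unfolding h1_def
    by (rule lookup_reciprocal[OF monom_dvd_top_exps_of_keys_lin_prod_reduced \<open>monom_dvd (axis_monom j) top_exps\<close>])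
  then show ?thesis using axis_monom_in_keys_lin_prod_reduced[OF assms] by (simp add: in_keys_iff)
qed

lemma keys_h1_le_top_exps:
  "m \<in> Poly_Mapping.keys h1 \<Longrightarrow> Poly_Mapping.lookup m i \<le> Poly_Mapping.lookup top_exps i"
  using keys_reciprocal[of top_exps lin_prod_reduced] by (auto simp: h1_def lookup_minus)

lemma var_degree_h1: "var_degree i h1 = Poly_Mapping.lookup top_exps i"
proof -
  define j where "j = (if i = 0 then 1 else 0::nat)"
  have "j < d" "j \<noteq> i" using two_le_d by (auto simp: j_def)
  then have "Poly_Mapping.lookup (top_exps - axis_monom j) i = Poly_Mapping.lookup top_exps i"
    by (simp add: lookup_top_exps_minus_axis_monom)
  with top_exps_minus_axis_monom_in_keys_h1[OF \<open>j < d\<close>] keys_h1_le_top_exps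
  show ?thesis by (rule var_degree_eqI)
qed

lemma irreducible_h1: "irreducible h1"
proof (rule irreducible_of_irreducible_reciprocal[OF _ _ var_degree_h1 keys_top_exps])
  show "irreducible (reciprocal top_exps h1)"
    using irreducible_lin_prod_reduced by (simp add: reciprocal_h1)
  show "h1 \<noteq> 0" using top_exps_minus_axis_monom_in_keys_h1[of 0] two_le_d by auto
  show "\<exists>m\<in>Poly_Mapping.keys h1. Poly_Mapping.lookup m i = 0" if "i < d" for i
    using top_exps_minus_axis_monom_in_keys_h1[OF that] lookup_top_exps_minus_axis_monom[OF that]
    by (intro bexI[of _ "top_exps - axis_monom i"]) simp_all
qed

lemma mpoly_vars_below_h1: "mpoly_vars_below d h1"
  unfolding mpoly_vars_below_def
proof (intro ballI subsetI)
  fix m i assume "m \<in> Poly_Mapping.keys h1" "i \<in> Poly_Mapping.keys m"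
  then have "i \<in> Poly_Mapping.keys top_exps"
    using keys_h1_le_top_exps[of m i] by (simp add: in_keys_iff)
  with keys_top_exps show "i \<in> {..<d}" by blast
qed

lemma mpoly_eval_subst_powers: "mpoly_eval (subst_powers p) u = mpoly_eval p (\<lambda>i. u i ^ subst_exp i)"
proof -
  have "monom_eval u (scale_monom m) = monom_eval (\<lambda>i. u i ^ subst_exp i) m" for m
  proof -
    have "monom_eval u (scale_monom m) = (\<Prod>i\<in>Poly_Mapping.keys m. u i ^ Poly_Mapping.lookup (scale_monom m) i)"
      by (rule monom_eval_superset) (auto simp: in_keys_iff lookup_scale_monom)
    then show ?thesis by (simp add: monom_eval_def lookup_scale_monom power_mult)
  qed
  then show ?thesis
    unfolding mpoly_eval_eq_eval_hom subst_powers_def eval_hom_map_monoms[OF complex_ring_hom_id]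
    by (simp add: eval_hom_def)
qed

lemma mpoly_eval_lin_prod: "mpoly_eval lin_prod u = (\<Prod>n\<in>W. \<Sum>j<d. inverse (rho q j (n j)) * u j)"
  by (simp add: mpoly_eval_eq_eval_hom lin_prod_def lin_def eval_hom_prod eval_hom_linear_form complex_ring_hom_id)

lemma monom_eval_top_exps: "monom_eval (\<lambda>j. z j ^ q j) top_exps = (\<Prod>j<d. z j ^ Qprod d q)"
proof -
  have "monom_eval (\<lambda>j. z j ^ q j) top_exps = (\<Prod>j<d. (z j ^ q j) ^ Poly_Mapping.lookup top_exps j)"
    by (rule monom_eval_superset[OF _ keys_top_exps]) simp
  also have "\<dots> = (\<Prod>j<d. z j ^ Qprod d q)"
    by (intro prod.cong refl) (simp add: lookup_top_exps q_dvd_Qprod flip: power_mult)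
  finally show ?thesis .
qed

lemma htilde1_eq_mpoly_eval_h1:
  assumes z: "\<forall>j<d. z j \<noteq> 0"
  shows "htilde1 d q z = mpoly_eval h1 (\<lambda>j. z j ^ q j)"
proof -
  have keys_vars: "Poly_Mapping.keys m \<subseteq> {..<d}" if "m \<in> Poly_Mapping.keys lin_prod_reduced" for m
    using keys_subset_of_monom_dvd[OF monom_dvd_top_exps_of_keys_lin_prod_reduced[OF that]] keys_top_exps
    by blast
  have "mpoly_eval h1 (\<lambda>j. z j ^ q j) =
      monom_eval (\<lambda>j. z j ^ q j) top_exps * mpoly_eval lin_prod_reduced (\<lambda>j. inverse (z j ^ q j))"
    unfolding h1_def using z keys_top_exps
    by (intro mpoly_eval_reciprocal monom_dvd_top_exps_of_keys_lin_prod_reduced) auto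
  also have "mpoly_eval lin_prod_reduced (\<lambda>j. inverse (z j ^ q j)) =
      mpoly_eval lin_prod_reduced (\<lambda>j. inverse (z j) ^ subst_exp j)"
    unfolding mpoly_eval_eq_eval_hom
    by (rule eval_hom_cong_vars[OF keys_vars]) (simp_all add: subst_exp_def power_inverse)
  also have "\<dots> = mpoly_eval lin_prod (\<lambda>j. inverse (z j))"
    by (simp flip: mpoly_eval_subst_powers add: subst_powers_lin_prod_reduced)
  finally show ?thesis
    by (simp add: htilde1_def monom_eval_top_exps mpoly_eval_lin_prod divide_inverse inverse_mult_distrib mult_ac)
qed

text \<open>Inverting the last variable turns \<open>h\<^sub>2\<close> into \<open>h\<^sub>1\<close>: it maps \<open>1 / (\<rho> z\<^sub>d)\<close> to
  \<open>\<rho>\<^sup>-\<^sup>1 z\<^sub>d\<close>, and reflecting the last coordinate of the grid turns \<open>\<rho>\<^sup>-\<^sup>1\<close> into \<open>\<rho>\<close>.\<close>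

lemma htilde2_eq_htilde1: "htilde2 d q z = htilde1 d q (z(d - 1 := inverse (z (d - 1))))"
proof -
  define e where "e = d - 1"
  have lessThan_d: "{..<d} = insert e {..<e}" using two_le_d by (auto simp: e_def)
  let ?z' = "z(e := inverse (z e))"
  let ?Q = "Qprod d q"
  define S where "S n = (\<Sum>j<e. 1 / (rho q j (n j) * z j))" for n
  have powers: "(\<Prod>j<d. ?z' j ^ ?Q) = (\<Prod>j<e. z j ^ ?Q) / z e ^ ?Q"
    unfolding lessThan_d by (simp add: power_inverse divide_inverse mult.commute)
  have factor: "(\<Sum>j<d. 1 / (rho q j (n j) * ?z' j)) = z e / rho q e (n e) + S n" for n
  proof -
    have "(\<Sum>j<e. 1 / (rho q j (n j) * ?z' j)) = S n" unfolding S_def by (intro sum.cong refl) auto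
    then show ?thesis unfolding lessThan_d by (simp add: divide_inverse mult.commute)
  qed
  have "htilde1 d q ?z' = (\<Prod>j<e. z j ^ ?Q) / z e ^ ?Q * (\<Prod>n\<in>W. z e / rho q e (n e) + S n)"
    unfolding htilde1_def powers factor ..
  also have "(\<Prod>n\<in>W. z e / rho q e (n e) + S n) = (\<Prod>n\<in>W. rho q e (n e) * z e + S n)"
    using two_le_d by (intro prod_reflect_coord_rho) (auto simp: e_def S_def reflect_coord_def)
  also have "(\<Prod>j<e. z j ^ ?Q) / z e ^ ?Q * \<dots> = htilde2 d q z"
    unfolding htilde2_def e_def[symmetric] S_def ..
  finally show ?thesis unfolding e_def by (rule sym)
qed

end

theorem mainTheorem7:
  fixes d :: nat and q :: "nat \<Rightarrow> nat"
  assumes "d \<ge> 2"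
    and "\<forall>j<d. q j > 0"
    and "Gcd (q ` {..<d}) = 1"
  shows "\<exists>h1 h2 :: mpoly.
           mpoly_vars_below d h1 \<and> mpoly_vars_below d h2 \<and>
           (\<forall>z. (\<forall>j<d. z j \<noteq> 0) \<longrightarrow>
                htilde1 d q z = mpoly_eval h1 (\<lambda>j. z j ^ q j)) \<and>
           (\<forall>z. (\<forall>j<d. z j \<noteq> 0) \<longrightarrow>
                htilde2 d q z = mpoly_eval h2 (\<lambda>j. if j = d - 1 then inverse (z j ^ q j) else z j ^ q j)) \<and>
           irreducible h1 \<and> irreducible h2"
proof -
  interpret cyclic_grid d q using assms by unfold_locales auto
  have "htilde2 d q z = mpoly_eval h1 (\<lambda>j. if j = d - 1 then inverse (z j ^ q j) else z j ^ q j)"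
    if "\<forall>j<d. z j \<noteq> 0" for z
  proof -
    have "htilde2 d q z = mpoly_eval h1 (\<lambda>j. (z(d - 1 := inverse (z (d - 1)))) j ^ q j)"
      using that htilde1_eq_mpoly_eval_h1 by (simp add: htilde2_eq_htilde1)
    also have "(\<lambda>j. (z(d - 1 := inverse (z (d - 1)))) j ^ q j) =
        (\<lambda>j. if j = d - 1 then inverse (z j ^ q j) else z j ^ q j)"
      by (auto simp: power_inverse)
    finally show ?thesis .
  qed
  then show ?thesis
    using mpoly_vars_below_h1 htilde1_eq_mpoly_eval_h1 irreducible_h1 by blast
qed

end
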